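(* Assume $(\mathcal A_2)$ and let $\omega>0$, $z_0\in L^2(\Omega)$. Then for all $0<h<h_0$, the solution $\tilde z_h:[0,\infty)\to V_h$ of $\langle\tilde z_h'(t),\phi_h\rangle+e^{-\omega t}\langle\tilde z_h(t)\,\mathbf v\cdot\nabla\tilde z_h(t),\phi_h\rangle=\langle(\mathcal A_{\omega_h}-\mathcal B_h\mathcal B_h^*\mathcal P_h)\tilde z_h(t),\phi_h\rangle$ for all $\phi_h\in V_h$, $t>0$, with $\tilde z_h(0)=\pi_hz_0$, satisfies $\|\tilde z_h(t)\|\le Ce^{-\omega_Pt}\|z_0\|$ for all $t\ge0$, with $C>0$ independent of $h$.
   Context: Let $\Omega\subset\mathbb R^d$, $d\in\{1,2,3\}$, be a bounded open domain with smooth boundary; $L^2(\Omega)$ is the Hilbert space with $\langle\phi,\psi\rangle=\int_\Omega\phi\bar\psi\,dx$ and norm $\|\cdot\|$ (functions in the discrete problem are real-valued). Fix $\eta>0$, $\mathbf v\in\mathbb R^d$, $\nu_0\in\mathbb R$, $f_s\in L^2(\Omega)$, a nonempty open set $\mathcal O\subset\Omega$ with indicator $\chi_{\mathcal O}$, and $y_s\in H^2(\Omega)\cap H^1_0(\Omega)$ solving $-\eta\Delta y_s+y_s\,\mathbf v\cdot\nabla y_s+\nu_0y_s=f_s$, $y_s=0$ on $\partial\Omega$. Let $s_0$ be the constant of $H^1(\Omega)\hookrightarrow L^4(\Omega)$, $C_a$ the Agmon constant ($\|z\|_{L^\infty}\le C_a\|z\|_{H^1}^{1/2}\|z\|_{H^2}^{1/2}$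 on $H^2\cap H^1_0$), and assume $\hat\nu:=\nu_0-\frac{|\mathbf v|^2}{\eta}(C_a^2+s_0^4)\|y_s\|_{H^2(\Omega)}^2>0$. $\mathcal Bu=\chi_{\mathcal O}u$. Let $a(z,\phi)=\eta\langle\nabla z,\nabla\phi\rangle+\langle y_s\mathbf v\cdot\nabla z,\phi\rangle+\langle(\mathbf v\cdot\nabla y_s)z,\phi\rangle+\nu_0\langle z,\phi\rangle$. For $h>0$, $V_h\subset H^1_0(\Omega)$ is a conforming finite element space on a triangulation of $\bar\Omega$ of mesh size $h$, $\pi_h$ the $L^2$-orthogonal projection onto $V_h$ (satisfying $\|v-\pi_hv\|\le Ch^2\|v\|_{H^2}$, $\|\nabla(v-\pi_hv)\|\le Ch\|v\|_{H^2}$ on $H^2\cap H^1_0$); $\mathcal A_h:V_h\to V_h$, $\langle-\mathcal A_hz_h,\phi_h\rangle=a(z_h,\phi_h)$; $\mathcal A_{\omega_h}=\mathcal A_h+\omega I_h$; $\mathcal B_h=\pi_h\mathcal B$. There exist $h_0>0$, $\omega_P>0$, $M_P>0$ such that for $0<h<h_0$ the discrete Riccati equation $\mathcal A_{\omega_h}^*\mathcal P_h+\mathcal P_h\mathcal A_{\omega_h}-\mathcal P_h\mathcal B_h\mathcal B_h^*\mathcal P_h+I_h=0$ has a unique self-adjoint nonnegative solution $\mathcal P_h\in\mathcal L(V_h)$ and $\|e^{t(\mathcal A_{\omega_h}-\mathcal B_h\mathcal B_h^*\mathcal P_h)}\|_{\mathcal L(V_h)}\le M_Pe^{-\omega_Pt}$.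 Assumption $(\mathcal A_2)$: $\Re\langle(\mathcal A_{\omega_h}-\mathcal B_h\mathcal B_h^*\mathcal P_h)\phi_h,\phi_h\rangle\le-\omega_P\|\phi_h\|^2$ for all $\phi_h\in V_h$ and all $0<h<h_0$. *)

theory Defs
  imports "HOL-Analysis.Analysis"
begin

definition L2 :: "(real^'d) set \<Rightarrow> (real^'d \<Rightarrow> real) \<Rightarrow> bool" where
  "L2 \<Omega> f \<longleftrightarrow> f \<in> borel_measurable (lebesgue_on \<Omega>) \<and>
     integrable (lebesgue_on \<Omega>) (\<lambda>x. (f x)\<^sup>2)"

definition ip :: "(real^'d) set \<Rightarrow> (real^'d \<Rightarrow> real) \<Rightarrow> (real^'d \<Rightarrow> real) \<Rightarrow> real" where
  "ip \<Omega> f g = integral\<^sup>L (lebesgue_on \<Omega>) (\<lambda>x. f x * g x)"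

definition nrm :: "(real^'d) set \<Rightarrow> (real^'d \<Rightarrow> real) \<Rightarrow> real" where
  "nrm \<Omega> f = sqrt (ip \<Omega> f f)"

definition pd :: "'d \<Rightarrow> (real^'d \<Rightarrow> real) \<Rightarrow> real^'d \<Rightarrow> real" where
  "pd i f x = frechet_derivative f (at x) (axis i 1)"

fun pds :: "'d list \<Rightarrow> (real^'d \<Rightarrow> real) \<Rightarrow> real^'d \<Rightarrow> real" where
  "pds [] f = f"
| "pds (i # is) f = pd i (pds is f)"

definition smooth_on :: "(real^'d) set \<Rightarrow> (real^'d \<Rightarrow> real) \<Rightarrow> bool" where
  "smooth_on U f \<longleftrightarrow> (\<forall>is. pds is f differentiable_on U)"

definition smooth_boundary :: "(real^'d) set \<Rightarrow> bool" where
  "smooth_boundary \<Omega> \<longleftrightarrow> (\<forall>x\<in>frontier \<Omega>. \<exists>U \<psi>. open U \<and> x \<in> U \<and> smooth_on U \<psi> \<and>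
      (\<forall>y\<in>U. frechet_derivative \<psi> (at y) \<noteq> (\<lambda>_. 0)) \<and> \<Omega> \<inter> U = {y\<in>U. \<psi> y < 0})"

definition test_fun :: "(real^'d) set \<Rightarrow> (real^'d \<Rightarrow> real) \<Rightarrow> bool" where
  "test_fun \<Omega> \<phi> \<longleftrightarrow> smooth_on UNIV \<phi> \<and> compact (closure {x. \<phi> x \<noteq> 0}) \<and>
      closure {x. \<phi> x \<noteq> 0} \<subseteq> \<Omega>"

definition is_wgrad :: "(real^'d) set \<Rightarrow> (real^'d \<Rightarrow> real) \<Rightarrow> ('d \<Rightarrow> real^'d \<Rightarrow> real) \<Rightarrow> bool" where
  "is_wgrad \<Omega> f G \<longleftrightarrow> L2 \<Omega> f \<and> (\<forall>i. L2 \<Omega> (G i) \<and>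
      (\<forall>\<phi>. test_fun \<Omega> \<phi> \<longrightarrow> ip \<Omega> f (pd i \<phi>) = - ip \<Omega> (G i) \<phi>))"

definition H1 :: "(real^'d) set \<Rightarrow> (real^'d \<Rightarrow> real) \<Rightarrow> bool" where
  "H1 \<Omega> f \<longleftrightarrow> (\<exists>G. is_wgrad \<Omega> f G)"

definition wgrad :: "(real^'d) set \<Rightarrow> (real^'d \<Rightarrow> real) \<Rightarrow> 'd \<Rightarrow> real^'d \<Rightarrow> real" where
  "wgrad \<Omega> f = (SOME G. is_wgrad \<Omega> f G)"

definition H10 :: "(real^'d) set \<Rightarrow> (real^'d \<Rightarrow> real) \<Rightarrow> bool" where
  "H10 \<Omega> f \<longleftrightarrow> H1 \<Omega> f \<and> (\<exists>\<phi>s. (\<forall>n. test_fun \<Omega> (\<phi>s n)) \<and>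
      (\<lambda>n. nrm \<Omega> (\<lambda>x. \<phi>s n x - f x)) \<longlonglongrightarrow> 0 \<and>
      (\<forall>i. (\<lambda>n. nrm \<Omega> (\<lambda>x. pd i (\<phi>s n) x - wgrad \<Omega> f i x)) \<longlonglongrightarrow> 0))"

definition H2 :: "(real^'d) set \<Rightarrow> (real^'d \<Rightarrow> real) \<Rightarrow> bool" where
  "H2 \<Omega> f \<longleftrightarrow> H1 \<Omega> f \<and> (\<forall>i. H1 \<Omega> (wgrad \<Omega> f i))"

definition H1norm :: "(real^'d) set \<Rightarrow> (real^'d \<Rightarrow> real) \<Rightarrow> real" where
  "H1norm \<Omega> f = sqrt ((nrm \<Omega> f)\<^sup>2 + (\<Sum>i\<in>UNIV. (nrm \<Omega> (wgrad \<Omega> f i))\<^sup>2))"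

definition H2norm :: "(real^'d) set \<Rightarrow> (real^'d \<Rightarrow> real) \<Rightarrow> real" where
  "H2norm \<Omega> f = sqrt ((nrm \<Omega> f)\<^sup>2 + (\<Sum>i\<in>UNIV. (nrm \<Omega> (wgrad \<Omega> f i))\<^sup>2)
      + (\<Sum>i\<in>UNIV. \<Sum>j\<in>UNIV. (nrm \<Omega> (wgrad \<Omega> (wgrad \<Omega> f i) j))\<^sup>2))"

definition L4norm :: "(real^'d) set \<Rightarrow> (real^'d \<Rightarrow> real) \<Rightarrow> real" where
  "L4norm \<Omega> f = (integral\<^sup>L (lebesgue_on \<Omega>) (\<lambda>x. (f x) ^ 4)) powr (1/4)"

definition vgrad :: "(real^'d) set \<Rightarrow> real^'d \<Rightarrow> (real^'d \<Rightarrow> real) \<Rightarrow> real^'d \<Rightarrow> real" where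
  "vgrad \<Omega> v z x = (\<Sum>i\<in>UNIV. v $ i * wgrad \<Omega> z i x)"

definition a_form :: "(real^'d) set \<Rightarrow> real \<Rightarrow> real^'d \<Rightarrow> real \<Rightarrow> (real^'d \<Rightarrow> real)
    \<Rightarrow> (real^'d \<Rightarrow> real) \<Rightarrow> (real^'d \<Rightarrow> real) \<Rightarrow> real" where
  "a_form \<Omega> \<eta> v \<nu>0 ys z \<phi> =
     \<eta> * (\<Sum>i\<in>UNIV. ip \<Omega> (wgrad \<Omega> z i) (wgrad \<Omega> \<phi> i))
   + ip \<Omega> (\<lambda>x. ys x * vgrad \<Omega> v z x) \<phi>
   + ip \<Omega> (\<lambda>x. vgrad \<Omega> v ys x * z x) \<phi>
   + \<nu>0 * ip \<Omega> z \<phi>"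

definition fspan :: "(real^'d \<Rightarrow> real) set \<Rightarrow> (real^'d \<Rightarrow> real) set" where
  "fspan Bs = {(\<lambda>x. \<Sum>b\<in>Bs. c b * b x) | c. True}"

definition proj :: "(real^'d) set \<Rightarrow> (real^'d \<Rightarrow> real) set \<Rightarrow> (real^'d \<Rightarrow> real) \<Rightarrow> real^'d \<Rightarrow> real" where
  "proj \<Omega> V f = (SOME u. u \<in> V \<and> (\<forall>\<phi>\<in>V. ip \<Omega> (\<lambda>x. f x - u x) \<phi> = 0))"

definition Ah :: "(real^'d) set \<Rightarrow> (real^'d \<Rightarrow> real) set
    \<Rightarrow> ((real^'d \<Rightarrow> real) \<Rightarrow> (real^'d \<Rightarrow> real) \<Rightarrow> real) \<Rightarrow> (real^'d \<Rightarrow> real) \<Rightarrow> real^'d \<Rightarrow> real" where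
  "Ah \<Omega> V a z = (SOME u. u \<in> V \<and> (\<forall>\<phi>\<in>V. - ip \<Omega> u \<phi> = a z \<phi>))"

definition Vadj :: "(real^'d) set \<Rightarrow> (real^'d \<Rightarrow> real) set
    \<Rightarrow> ((real^'d \<Rightarrow> real) \<Rightarrow> (real^'d \<Rightarrow> real)) \<Rightarrow> (real^'d \<Rightarrow> real) \<Rightarrow> real^'d \<Rightarrow> real" where
  "Vadj \<Omega> V T z = (SOME u. u \<in> V \<and> (\<forall>\<phi>\<in>V. ip \<Omega> u \<phi> = ip \<Omega> z (T \<phi>)))"

definition Bh :: "(real^'d) set \<Rightarrow> (real^'d \<Rightarrow> real) set \<Rightarrow> (real^'d) set
    \<Rightarrow> (real^'d \<Rightarrow> real) \<Rightarrow> real^'d \<Rightarrow> real" where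
  "Bh \<Omega> V Obs u = proj \<Omega> V (\<lambda>x. indicator Obs x * u x)"

definition Bh_adj :: "(real^'d) set \<Rightarrow> (real^'d \<Rightarrow> real) set \<Rightarrow> (real^'d) set
    \<Rightarrow> (real^'d \<Rightarrow> real) \<Rightarrow> real^'d \<Rightarrow> real" where
  "Bh_adj \<Omega> V Obs z = (SOME u. L2 \<Omega> u \<and> (\<forall>f. L2 \<Omega> f \<longrightarrow> ip \<Omega> u f = ip \<Omega> z (Bh \<Omega> V Obs f)))"

definition Aw :: "(real^'d) set \<Rightarrow> (real^'d \<Rightarrow> real) set
    \<Rightarrow> ((real^'d \<Rightarrow> real) \<Rightarrow> (real^'d \<Rightarrow> real) \<Rightarrow> real) \<Rightarrow> real \<Rightarrow> (real^'d \<Rightarrow> real) \<Rightarrow> real^'d \<Rightarrow> real" where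
  "Aw \<Omega> V a \<omega> z = (\<lambda>x. Ah \<Omega> V a z x + \<omega> * z x)"

definition closed_loop :: "(real^'d) set \<Rightarrow> (real^'d \<Rightarrow> real) set
    \<Rightarrow> ((real^'d \<Rightarrow> real) \<Rightarrow> (real^'d \<Rightarrow> real) \<Rightarrow> real) \<Rightarrow> real \<Rightarrow> (real^'d) set
    \<Rightarrow> ((real^'d \<Rightarrow> real) \<Rightarrow> (real^'d \<Rightarrow> real)) \<Rightarrow> (real^'d \<Rightarrow> real) \<Rightarrow> real^'d \<Rightarrow> real" where
  "closed_loop \<Omega> V a \<omega> Obs P z = (\<lambda>x. Aw \<Omega> V a \<omega> z x - Bh \<Omega> V Obs (Bh_adj \<Omega> V Obs (P z)) x)"

definition riccati_res :: "(real^'d) set \<Rightarrow> (real^'d \<Rightarrow> real) set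
    \<Rightarrow> ((real^'d \<Rightarrow> real) \<Rightarrow> (real^'d \<Rightarrow> real) \<Rightarrow> real) \<Rightarrow> real \<Rightarrow> (real^'d) set
    \<Rightarrow> ((real^'d \<Rightarrow> real) \<Rightarrow> (real^'d \<Rightarrow> real)) \<Rightarrow> (real^'d \<Rightarrow> real) \<Rightarrow> real^'d \<Rightarrow> real" where
  "riccati_res \<Omega> V a \<omega> Obs P z = (\<lambda>x. Vadj \<Omega> V (Aw \<Omega> V a \<omega>) (P z) x + P (Aw \<Omega> V a \<omega> z) x
      - P (Bh \<Omega> V Obs (Bh_adj \<Omega> V Obs (P z))) x + z x)"

end

theory Submission
  imports Defs "HOL-Computational_Algebra.Polynomial"
begin

text \<open>The nonlinear term does not contribute to the energy: for \<open>w \<in> H\<^sup>1\<^sub>0(\<Omega>)\<close>,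
  \<open>\<langle>w v\<cdot>\<nabla>w, w\<rangle> = \<integral> w\<^sup>2 v\<cdot>\<nabla>w = 0\<close>, because \<open>w\<^sup>2 \<partial>\<^sub>iw\<close> is a third of the derivative \<open>\<partial>\<^sub>i(w\<^sup>3)\<close> of a
  function vanishing on the boundary. Since \<open>V\<^sub>h\<close> is spanned by \<open>H\<^sup>1\<^sub>0\<close> functions, testing the
  discrete equation with \<open>\<phi>\<^sub>h = z\<^sub>h(t)\<close> and using \<open>(A\<^sub>2)\<close> gives
  \<open>d/dt \<parallel>z\<^sub>h\<parallel>\<^sup>2 \<le> -2\<omega>\<^sub>P \<parallel>z\<^sub>h\<parallel>\<^sup>2\<close>, hence
  \<open>\<parallel>z\<^sub>h(t)\<parallel> \<le> exp(-\<omega>\<^sub>P t) \<parallel>\<pi>\<^sub>h z\<^sub>0\<parallel> \<le> exp(-\<omega>\<^sub>P t) \<parallel>z\<^sub>0\<parallel>\<close>: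
  the estimate holds with \<open>C = 1\<close>.

  The cancellation is obtained by approximating \<open>w\<close> with test functions \<open>\<psi>\<^sub>n\<close> and passing to
  the limit in \<open>2 \<integral> w \<psi>\<^sub>n \<partial>\<^sub>i\<psi>\<^sub>n = -\<integral> \<psi>\<^sub>n\<^sup>2 \<partial>\<^sub>iw\<close>, using continuity of \<open>(f, g, k) \<mapsto> \<integral> f g k\<close> on
  \<open>L\<^sup>4 \<times> L\<^sup>4 \<times> L\<^sup>2\<close> and the embedding \<open>H\<^sup>1 \<subseteq> L\<^sup>4\<close> with constant \<open>s\<^sub>0\<close>. Weak gradients are only
  determined almost everywhere, which is where the fundamental lemma of the calculus of
  variations enters.\<close>

section \<open>The inner product of \<open>L\<^sup>2(\<Omega>)\<close>\<close>

lemma two_abs_mult_le: fixes a b :: real shows "2 * \<bar>a * b\<bar> \<le> a\<^sup>2 + b\<^sup>2"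
proof -
  have "0 \<le> (\<bar>a\<bar> - \<bar>b\<bar>)\<^sup>2" by simp
  then show ?thesis by (simp add: power2_eq_square algebra_simps abs_mult)
qed

lemma L2_integrable_mult:
  assumes "L2 \<Omega> f" "L2 \<Omega> g"
  shows "integrable (lebesgue_on \<Omega>) (\<lambda>x. f x * g x)"
proof (rule Bochner_Integration.integrable_bound)
  show "integrable (lebesgue_on \<Omega>) (\<lambda>x. (f x)\<^sup>2 + (g x)\<^sup>2)"
    using assms by (auto simp: L2_def)
  show "(\<lambda>x. f x * g x) \<in> borel_measurable (lebesgue_on \<Omega>)"
    using assms by (auto simp: L2_def)
  show "AE x in lebesgue_on \<Omega>. norm (f x * g x) \<le> norm ((f x)\<^sup>2 + (g x)\<^sup>2)"
  proof (rule AE_I2)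
    fix x
    have "2 * \<bar>f x * g x\<bar> \<le> (f x)\<^sup>2 + (g x)\<^sup>2" by (rule two_abs_mult_le)
    then show "norm (f x * g x) \<le> norm ((f x)\<^sup>2 + (g x)\<^sup>2)" by simp
  qed
qed

lemma L2_lin:
  assumes "L2 \<Omega> f" "L2 \<Omega> g"
  shows "L2 \<Omega> (\<lambda>x. a * f x + b * g x)"
proof -
  have "integrable (lebesgue_on \<Omega>) (\<lambda>x. a\<^sup>2 * (f x)\<^sup>2 + b\<^sup>2 * (g x)\<^sup>2 + 2*a*b*(f x * g x))"
    using assms L2_integrable_mult[OF assms] by (auto simp: L2_def)
  moreover have "(\<lambda>x. a\<^sup>2 * (f x)\<^sup>2 + b\<^sup>2 * (g x)\<^sup>2 + 2*a*b*(f x * g x)) = (\<lambda>x. (a * f x + b * g x)\<^sup>2)"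
    by (auto simp: power2_eq_square algebra_simps)
  ultimately show ?thesis using assms by (auto simp: L2_def)
qed

lemma L2_zero: "L2 \<Omega> (\<lambda>x. 0)" by (simp add: L2_def)

lemma L2_add: "L2 \<Omega> f \<Longrightarrow> L2 \<Omega> g \<Longrightarrow> L2 \<Omega> (\<lambda>x. f x + g x)"
  using L2_lin[of \<Omega> f g 1 1] by simp

lemma L2_diff: "L2 \<Omega> f \<Longrightarrow> L2 \<Omega> g \<Longrightarrow> L2 \<Omega> (\<lambda>x. f x - g x)"
  using L2_lin[of \<Omega> f g 1 "-1"] by simp

lemma L2_scale: "L2 \<Omega> f \<Longrightarrow> L2 \<Omega> (\<lambda>x. c * f x)"
  using L2_lin[of \<Omega> f f c 0] by simp

lemma L2_sum: "finite B \<Longrightarrow> (\<And>b. b \<in> B \<Longrightarrow> L2 \<Omega> (F b)) \<Longrightarrow> L2 \<Omega> (\<lambda>x. \<Sum>b\<in>B. F b x)"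
  by (induction B rule: finite_induct) (simp_all add: L2_zero L2_add)

lemma ip_sym: "ip \<Omega> f g = ip \<Omega> g f"
  by (simp add: ip_def mult.commute)

lemma ip_lin1:
  assumes "L2 \<Omega> f" "L2 \<Omega> g" "L2 \<Omega> h"
  shows "ip \<Omega> (\<lambda>x. a * f x + b * g x) h = a * ip \<Omega> f h + b * ip \<Omega> g h"
proof -
  have "ip \<Omega> (\<lambda>x. a * f x + b * g x) h
      = integral\<^sup>L (lebesgue_on \<Omega>) (\<lambda>x. a * (f x * h x) + b * (g x * h x))"
    unfolding ip_def by (simp add: algebra_simps)
  then show ?thesis
    unfolding ip_def using L2_integrable_mult[OF assms(1,3)] L2_integrable_mult[OF assms(2,3)] by simp
qed

lemma ip_lin2:
  assumes "L2 \<Omega> f" "L2 \<Omega> g" "L2 \<Omega> h"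
  shows "ip \<Omega> h (\<lambda>x. a * f x + b * g x) = a * ip \<Omega> h f + b * ip \<Omega> h g"
  using ip_lin1[OF assms] by (simp add: ip_sym)

lemma ip_add1: "L2 \<Omega> f \<Longrightarrow> L2 \<Omega> g \<Longrightarrow> L2 \<Omega> h \<Longrightarrow> ip \<Omega> (\<lambda>x. f x + g x) h = ip \<Omega> f h + ip \<Omega> g h"
  using ip_lin1[of \<Omega> f g h 1 1] by simp

lemma ip_diff1: "L2 \<Omega> f \<Longrightarrow> L2 \<Omega> g \<Longrightarrow> L2 \<Omega> h \<Longrightarrow> ip \<Omega> (\<lambda>x. f x - g x) h = ip \<Omega> f h - ip \<Omega> g h"
  using ip_lin1[of \<Omega> f g h 1 "-1"] by simp

lemma ip_add2: "L2 \<Omega> f \<Longrightarrow> L2 \<Omega> g \<Longrightarrow> L2 \<Omega> h \<Longrightarrow> ip \<Omega> h (\<lambda>x. f x + g x) = ip \<Omega> h f + ip \<Omega> h g"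
  using ip_lin2[of \<Omega> f g h 1 1] by simp

lemma ip_scale1: "ip \<Omega> (\<lambda>x. c * f x) h = c * ip \<Omega> f h"
  by (simp add: ip_def mult.assoc)

lemma ip_scale2: "ip \<Omega> h (\<lambda>x. c * f x) = c * ip \<Omega> h f"
  by (simp add: ip_def algebra_simps)

lemma ip_self_nonneg: "ip \<Omega> f f \<ge> 0"
  unfolding ip_def by (rule integral_nonneg_AE) simp

lemma nrm_sq: "(nrm \<Omega> f)\<^sup>2 = ip \<Omega> f f"
  by (simp add: nrm_def ip_self_nonneg)

lemma nrm_nonneg: "nrm \<Omega> f \<ge> 0"
  by (simp add: nrm_def ip_self_nonneg)

lemma ip_Cauchy_Schwarz:
  assumes "L2 \<Omega> f" "L2 \<Omega> g"
  shows "\<bar>ip \<Omega> f g\<bar> \<le> nrm \<Omega> f * nrm \<Omega> g"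
proof -
  have quadratic: "0 \<le> ip \<Omega> f f * t\<^sup>2 + 2 * ip \<Omega> f g * t + ip \<Omega> g g" for t
  proof -
    have "0 \<le> ip \<Omega> (\<lambda>x. t * f x + 1 * g x) (\<lambda>x. t * f x + 1 * g x)" by (rule ip_self_nonneg)
    also have "\<dots> = t * (t * ip \<Omega> f f + 1 * ip \<Omega> f g) + 1 * (t * ip \<Omega> g f + 1 * ip \<Omega> g g)"
      by (simp only: ip_lin1[OF assms L2_lin[OF assms]] ip_lin2[OF assms assms(1)] ip_lin2[OF assms assms(2)])
    finally show ?thesis by (simp add: ip_sym[of \<Omega> g f] power2_eq_square algebra_simps)
  qed
  have "(ip \<Omega> f g)\<^sup>2 \<le> ip \<Omega> f f * ip \<Omega> g g"
  proof (cases "ip \<Omega> f f = 0")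
    case True
    have "ip \<Omega> f g = 0"
    proof (rule ccontr)
      assume "ip \<Omega> f g \<noteq> 0"
      then show False
        using quadratic[of "- (ip \<Omega> g g + 1) / (2 * ip \<Omega> f g)"] True by simp
    qed
    then show ?thesis using ip_self_nonneg[of \<Omega> f] ip_self_nonneg[of \<Omega> g] by simp
  next
    case False
    then have pos: "ip \<Omega> f f > 0" using ip_self_nonneg[of \<Omega> f] by simp
    have "0 \<le> ip \<Omega> g g - (ip \<Omega> f g)\<^sup>2 / ip \<Omega> f f"
      using quadratic[of "- ip \<Omega> f g / ip \<Omega> f f"] pos by (simp add: power2_eq_square field_simps)
    then show ?thesis using pos by (simp add: field_simps)
  qed
  then have "sqrt ((ip \<Omega> f g)\<^sup>2) \<le> sqrt (ip \<Omega> f f * ip \<Omega> g g)"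
    by (rule real_sqrt_le_mono)
  then show ?thesis by (simp add: nrm_def real_sqrt_mult)
qed

lemma nrm_triangle:
  assumes "L2 \<Omega> f" "L2 \<Omega> g"
  shows "nrm \<Omega> (\<lambda>x. f x + g x) \<le> nrm \<Omega> f + nrm \<Omega> g"
proof -
  have "(nrm \<Omega> (\<lambda>x. f x + g x))\<^sup>2 = ip \<Omega> f f + 2 * ip \<Omega> f g + ip \<Omega> g g"
    using assms L2_add[OF assms] by (simp add: nrm_sq ip_add1 ip_add2 ip_sym[of \<Omega> g f])
  also have "\<dots> \<le> (nrm \<Omega> f)\<^sup>2 + 2 * (nrm \<Omega> f * nrm \<Omega> g) + (nrm \<Omega> g)\<^sup>2"
    using ip_Cauchy_Schwarz[OF assms] by (simp add: nrm_sq)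
  also have "\<dots> = (nrm \<Omega> f + nrm \<Omega> g)\<^sup>2" by (simp add: power2_eq_square algebra_simps)
  finally show ?thesis
    using nrm_nonneg[of \<Omega>] by (meson add_nonneg_nonneg power2_le_imp_le)
qed

lemma nrm_scale: "nrm \<Omega> (\<lambda>x. c * f x) = \<bar>c\<bar> * nrm \<Omega> f"
  by (simp add: nrm_def ip_scale1 ip_scale2 real_sqrt_mult flip: power2_eq_square mult.assoc)

lemma nrm_diff_commute: "nrm \<Omega> (\<lambda>x. f x - g x) = nrm \<Omega> (\<lambda>x. g x - f x)"
  unfolding nrm_def ip_def by (simp add: algebra_simps)

lemma nrm_reverse_triangle:
  assumes "L2 \<Omega> f" "L2 \<Omega> g"
  shows "\<bar>nrm \<Omega> f - nrm \<Omega> g\<bar> \<le> nrm \<Omega> (\<lambda>x. f x - g x)"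
  using nrm_triangle[OF L2_diff[OF assms] assms(2)] nrm_triangle[OF L2_diff[OF assms(2,1)] assms(1)]
    nrm_diff_commute[of \<Omega> g f]
  by simp

lemma nrm_cong_AE:
  assumes "AE x in lebesgue_on \<Omega>. f x = g x"
    and "f \<in> borel_measurable (lebesgue_on \<Omega>)" "g \<in> borel_measurable (lebesgue_on \<Omega>)"
  shows "nrm \<Omega> f = nrm \<Omega> g"
proof -
  have "AE x in lebesgue_on \<Omega>. f x * f x = g x * g x" using assms(1) by eventually_elim simp
  then have "integral\<^sup>L (lebesgue_on \<Omega>) (\<lambda>x. f x * f x) = integral\<^sup>L (lebesgue_on \<Omega>) (\<lambda>x. g x * g x)"
    by (intro integral_cong_AE borel_measurable_times assms(2,3))
  then show ?thesis by (simp add: nrm_def ip_def)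
qed

lemma nrm_sum_le:
  "finite B \<Longrightarrow> (\<And>b. b \<in> B \<Longrightarrow> L2 \<Omega> (F b)) \<Longrightarrow>
    nrm \<Omega> (\<lambda>x. \<Sum>b\<in>B. c b * F b x) \<le> (\<Sum>b\<in>B. \<bar>c b\<bar> * nrm \<Omega> (F b))"
proof (induction B rule: finite_induct)
  case empty
  then show ?case by (simp add: nrm_def ip_def)
next
  case (insert b B)
  have "nrm \<Omega> (\<lambda>x. \<Sum>b\<in>insert b B. c b * F b x) \<le> nrm \<Omega> (\<lambda>x. c b * F b x) + nrm \<Omega> (\<lambda>x. \<Sum>b\<in>B. c b * F b x)"
    using insert by (simp add: nrm_triangle L2_scale L2_sum)
  then show ?case using insert by (simp add: nrm_scale)
qed

lemma nrm_sum_tendsto_0: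
  assumes B: "finite B" and L: "\<And>b n. b \<in> B \<Longrightarrow> L2 \<Omega> (F b n)"
    and lim: "\<And>b. b \<in> B \<Longrightarrow> (\<lambda>n. nrm \<Omega> (F b n)) \<longlonglongrightarrow> 0"
  shows "(\<lambda>n. nrm \<Omega> (\<lambda>x. \<Sum>b\<in>B. c b * F b n x)) \<longlonglongrightarrow> 0"
proof (rule Lim_null_comparison)
  show "\<forall>\<^sub>F n in sequentially. norm (nrm \<Omega> (\<lambda>x. \<Sum>b\<in>B. c b * F b n x)) \<le> (\<Sum>b\<in>B. \<bar>c b\<bar> * nrm \<Omega> (F b n))"
  proof (intro always_eventually allI)
    fix n
    have "nrm \<Omega> (\<lambda>x. \<Sum>b\<in>B. c b * F b n x) \<le> (\<Sum>b\<in>B. \<bar>c b\<bar> * nrm \<Omega> (F b n))"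
      using nrm_sum_le[OF B, of \<Omega> "\<lambda>b. F b n" c] L by auto
    then show "norm (nrm \<Omega> (\<lambda>x. \<Sum>b\<in>B. c b * F b n x)) \<le> (\<Sum>b\<in>B. \<bar>c b\<bar> * nrm \<Omega> (F b n))"
      using nrm_nonneg[of \<Omega> "\<lambda>x. \<Sum>b\<in>B. c b * F b n x"] by simp
  qed
  have "(\<lambda>n. \<Sum>b\<in>B. \<bar>c b\<bar> * nrm \<Omega> (F b n)) \<longlonglongrightarrow> (\<Sum>b\<in>B. \<bar>c b\<bar> * 0)"
    by (intro tendsto_sum tendsto_mult tendsto_const lim)
  then show "(\<lambda>n. \<Sum>b\<in>B. \<bar>c b\<bar> * nrm \<Omega> (F b n)) \<longlonglongrightarrow> 0" by simp
qed

section \<open>Smooth functions\<close>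

abbreviation everywhere_differentiable :: "(real^'d \<Rightarrow> real) \<Rightarrow> bool" where
  "everywhere_differentiable f \<equiv> (\<forall>x. f differentiable (at x))"

lemma smooth_on_UNIV: "smooth_on UNIV f \<longleftrightarrow> (\<forall>is. everywhere_differentiable (pds is f))"
  by (simp add: smooth_on_def differentiable_on_def)

lemma pd_eq: "(f has_derivative f') (at x) \<Longrightarrow> pd i f x = f' (axis i 1)"
  unfolding pd_def using frechet_derivative_at by metis

lemma pd_add:
  assumes "f differentiable (at x)" "g differentiable (at x)"
  shows "pd i (\<lambda>y. f y + g y) x = pd i f x + pd i g x"
  using pd_eq[OF has_derivative_add[OF frechet_derivative_works[THEN iffD1, OF assms(1)]
        frechet_derivative_works[THEN iffD1, OF assms(2)]]]
  by (simp add: pd_def)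

lemma pd_scale:
  assumes "f differentiable (at x)"
  shows "pd i (\<lambda>y. c * f y) x = c * pd i f x"
  using pd_eq[OF has_derivative_mult_right[OF frechet_derivative_works[THEN iffD1, OF assms]]]
  by (simp add: pd_def)

lemma pd_mult:
  assumes "f differentiable (at x)" "g differentiable (at x)"
  shows "pd i (\<lambda>y. f y * g y) x = pd i f x * g x + f x * pd i g x"
  using pd_eq[OF has_derivative_mult[OF frechet_derivative_works[THEN iffD1, OF assms(1)]
        frechet_derivative_works[THEN iffD1, OF assms(2)]]]
  by (simp add: pd_def)

lemma pd_mult_fun:
  "everywhere_differentiable f \<Longrightarrow> everywhere_differentiable g \<Longrightarrow>
    pd i (\<lambda>x. f x * g x) = (\<lambda>x. pd i f x * g x + f x * pd i g x)"
  by (auto simp: pd_mult)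

lemma pd_const: "pd i (\<lambda>y. c) x = 0"
  by (simp add: pd_def)

lemma pds_append: "pds (is @ js) f = pds is (pds js f)"
  by (induction "is") auto

lemma smooth_pd: "smooth_on UNIV f \<Longrightarrow> smooth_on UNIV (pd i f)"
  unfolding smooth_on_UNIV
proof
  fix "is"
  assume "\<forall>is. everywhere_differentiable (pds is f)"
  then have "everywhere_differentiable (pds (is @ [i]) f)" by blast
  then show "everywhere_differentiable (pds is (pd i f))" by (simp add: pds_append)
qed

lemma smooth_differentiable: "smooth_on UNIV f \<Longrightarrow> everywhere_differentiable f"
  unfolding smooth_on_UNIV by (metis pds.simps(1))

lemma pds_add:
  assumes "\<And>js. length js < length is \<Longrightarrow>
    everywhere_differentiable (pds js F) \<and> everywhere_differentiable (pds js G)"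
  shows "pds is (\<lambda>x. F x + G x) = (\<lambda>x. pds is F x + pds is G x)"
  using assms
proof (induction "is")
  case (Cons i "is")
  have "pds is (\<lambda>x. F x + G x) = (\<lambda>x. pds is F x + pds is G x)"
    using Cons.IH Cons.prems by force
  then show ?case using Cons.prems[of "is"] by (simp add: pd_add)
qed simp

lemma smooth_add:
  assumes "smooth_on UNIV f" "smooth_on UNIV g"
  shows "smooth_on UNIV (\<lambda>x. f x + g x)"
proof -
  have "pds is (\<lambda>x. f x + g x) = (\<lambda>x. pds is f x + pds is g x)" for "is"
    using assms by (intro pds_add) (auto simp: smooth_on_UNIV)
  then show ?thesis using assms by (auto simp: smooth_on_UNIV intro: differentiable_add)
qed

lemma pds_const: "pds is (\<lambda>x. c) = (\<lambda>x. if is = [] then c else 0)"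
  by (induction "is") (auto simp: pd_const)

lemma smooth_const: "smooth_on UNIV (\<lambda>x. c)"
  unfolding smooth_on_UNIV pds_const by simp

lemma differentiable_pds_mult:
  shows "\<forall>(is::'d::finite list) (f::real^'d \<Rightarrow> real) (g::real^'d \<Rightarrow> real). length is \<le> n \<longrightarrow> smooth_on UNIV f \<longrightarrow> smooth_on UNIV g \<longrightarrow> everywhere_differentiable (pds is (\<lambda>x. f x * g x))"
proof (induction n)
  case 0
  show ?case
  proof (rule allI, rule allI, rule allI, intro impI)
    fix "is" :: "'d list" and f g :: "real^'d \<Rightarrow> real"
    assume "length is \<le> 0" "smooth_on UNIV f" "smooth_on UNIV g"
    then show "everywhere_differentiable (pds is (\<lambda>x. f x * g x))"
      using smooth_differentiable by (auto intro: differentiable_mult)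
  qed
next
  case (Suc n)
  show ?case
  proof (rule allI, rule allI, rule allI, intro impI)
    fix "is" :: "'d list" and f g :: "real^'d \<Rightarrow> real"
    assume len: "length is \<le> Suc n" and sf: "smooth_on UNIV f" and sg: "smooth_on UNIV g"
    show "everywhere_differentiable (pds is (\<lambda>x. f x * g x))"
    proof (cases "length is \<le> n")
      case True then show ?thesis using Suc.IH sf sg by blast
    next
      case False
      then have "is \<noteq> []" by auto
      then obtain js i where isd: "is = js @ [i]" by (metis rev_exhaust)
      with len have lj: "length js \<le> n" by simp
      have sf': "smooth_on UNIV (pd i f)" and sg': "smooth_on UNIV (pd i g)"
        using sf sg smooth_pd by auto
      have pdfg: "pd i (\<lambda>x. f x * g x) = (\<lambda>x. pd i f x * g x + f x * pd i g x)"
        using smooth_differentiable[OF sf] smooth_differentiable[OF sg] by (auto simp: pd_mult_fun)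
      have "pds is (\<lambda>x. f x * g x) = pds js (\<lambda>x. pd i f x * g x + f x * pd i g x)"
        by (simp add: isd pds_append pdfg)
      also have "\<dots> = (\<lambda>x. pds js (\<lambda>x. pd i f x * g x) x + pds js (\<lambda>x. f x * pd i g x) x)"
        by (rule pds_add) (use Suc.IH sf sg sf' sg' lj in auto)
      finally have e: "pds is (\<lambda>x. f x * g x) = (\<lambda>x. pds js (\<lambda>x. pd i f x * g x) x + pds js (\<lambda>x. f x * pd i g x) x)" .
      have "everywhere_differentiable (pds js (\<lambda>x. pd i f x * g x))" "everywhere_differentiable (pds js (\<lambda>x. f x * pd i g x))"
        using Suc.IH sf sg sf' sg' lj by auto
      then show ?thesis unfolding e by (auto intro: differentiable_add)
    qed
  qed
qed

lemma smooth_mult: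
  assumes "smooth_on UNIV f" "smooth_on UNIV g"
  shows "smooth_on UNIV (\<lambda>x. f x * g x)"
  unfolding smooth_on_UNIV using differentiable_pds_mult assms by blast

lemma smooth_prod:
  "finite B \<Longrightarrow> (\<And>b. b \<in> B \<Longrightarrow> smooth_on UNIV (F b)) \<Longrightarrow> smooth_on UNIV (\<lambda>x. \<Prod>b\<in>B. F b x)"
  by (induction B rule: finite_induct) (simp_all add: smooth_const smooth_mult)

definition derivative_sequence :: "(nat \<Rightarrow> real \<Rightarrow> real) \<Rightarrow> bool" where
  "derivative_sequence F \<longleftrightarrow> (\<forall>k t. (F k has_real_derivative F (Suc k) t) (at t))"

lemma has_derivative_derivative_sequence_coordinate:
  assumes "derivative_sequence F"
  shows "((\<lambda>x::real^'d. c * F k (a * x $ j + b)) has_derivative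
           (\<lambda>h. c * (F (Suc k) (a * x $ j + b) * (a * h $ j)))) (at x)"
proof -
  have "((\<lambda>h::real^'d. h $ j) has_derivative (\<lambda>h. h $ j)) (at x)"
    by (rule bounded_linear_imp_has_derivative[OF bounded_linear_vec_nth])
  then have "((\<lambda>h::real^'d. a * h $ j) has_derivative (\<lambda>h. a * h $ j)) (at x)"
    by (rule has_derivative_mult_right)
  then have "((\<lambda>x::real^'d. a * x $ j + b) has_derivative (\<lambda>h. a * h $ j)) (at x)"
    by (intro has_derivative_eq_rhs[OF has_derivative_add_const]) auto
  moreover have "(F k has_derivative (\<lambda>u. F (Suc k) (a * x $ j + b) * u)) (at (a * x $ j + b))"
    using assms unfolding derivative_sequence_def has_field_derivative_def by blast
  ultimately have "((\<lambda>x::real^'d. F k (a * x $ j + b)) has_derivative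
      (\<lambda>h. F (Suc k) (a * x $ j + b) * (a * h $ j))) (at x)"
    by (rule has_derivative_compose)
  then show ?thesis by (rule has_derivative_mult_right)
qed

lemma pds_derivative_sequence_coordinate:
  assumes "derivative_sequence F"
  shows "pds is (\<lambda>x::real^'d. c * F k (a * x $ j + b)) =
    (\<lambda>x. (c * (\<Prod>l\<leftarrow>is. (if l = j then a else 0))) * F (k + length is) (a * x $ j + b))"
proof (induction "is")
  case (Cons i "is")
  show ?case
  proof
    fix x :: "real^'d"
    have "pds (i # is) (\<lambda>x::real^'d. c * F k (a * x $ j + b)) x =
        pd i (\<lambda>x. (c * (\<Prod>l\<leftarrow>is. (if l = j then a else 0))) * F (k + length is) (a * x $ j + b)) x"
      by (simp add: Cons.IH)
    also have "\<dots> = (c * (\<Prod>l\<leftarrow>is. (if l = j then a else 0))) *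
        (F (Suc (k + length is)) (a * x $ j + b) * (a * axis i 1 $ j))"
      by (rule pd_eq[OF has_derivative_derivative_sequence_coordinate[OF assms]])
    finally have "pds (i # is) (\<lambda>x::real^'d. c * F k (a * x $ j + b)) x = (c * (\<Prod>l\<leftarrow>is. (if l = j then a else 0))) *
        (F (Suc (k + length is)) (a * x $ j + b) * (a * axis i 1 $ j))" .
    then show "pds (i # is) (\<lambda>x::real^'d. c * F k (a * x $ j + b)) x
        = (c * (\<Prod>l\<leftarrow>i # is. (if l = j then a else 0))) * F (k + length (i # is)) (a * x $ j + b)"
      by (auto simp: axis_def)
  qed
qed simp

lemma smooth_derivative_sequence_coordinate:
  assumes "derivative_sequence F"
  shows "smooth_on UNIV (\<lambda>x::real^'d. F k (a * x $ j + b))"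
proof -
  have "everywhere_differentiable (pds is (\<lambda>x::real^'d. 1 * F k (a * x $ j + b)))" for "is"
    unfolding pds_derivative_sequence_coordinate[OF assms] differentiable_def
    using has_derivative_derivative_sequence_coordinate[OF assms,
        of "1 * (\<Prod>l\<leftarrow>is. (if l = j then a else 0))" "k + length is" a j b] by blast
  then show ?thesis unfolding smooth_on_UNIV by simp
qed

text \<open>\<open>flat k\<close> is the \<open>k\<close>-th derivative of \<open>t \<mapsto> exp (-1/t)\<close>, extended by \<open>0\<close> to \<open>t \<le> 0\<close>.\<close>

primrec flat_poly :: "nat \<Rightarrow> real poly" where
  "flat_poly 0 = 1"
| "flat_poly (Suc k) = [:0, 0, 1:] * (flat_poly k - pderiv (flat_poly k))"

definition flat :: "nat \<Rightarrow> real \<Rightarrow> real" where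
  "flat k t = (if t > 0 then poly (flat_poly k) (1 / t) * exp (- (1 / t)) else 0)"

lemma tendsto_poly_exp_at_top: "((\<lambda>u. u ^ n * poly q u * exp (- u)) \<longlongrightarrow> (0::real)) at_top"
proof (induction q arbitrary: n)
  case (pCons a q)
  have e: "u ^ n * poly (pCons a q) u * exp (- u) = a * (u ^ n / exp u) + u ^ Suc n * poly q u * exp (- u)" for u :: real
    by (simp add: exp_minus field_simps)
  have "((\<lambda>u. a * (u ^ n / exp u) + u ^ Suc n * poly q u * exp (- u)) \<longlongrightarrow> a * 0 + 0) at_top"
    by (intro tendsto_intros tendsto_power_div_exp_0 pCons.IH)
  then show ?case unfolding e by simp
qed simp

lemma has_real_derivative_poly_inverse_exp:
  assumes "t > 0"
  shows "((\<lambda>t. poly p (1 / t) * exp (- (1 / t))) has_real_derivative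
     poly ([:0, 0, 1:] * (p - pderiv p)) (1 / t) * exp (- (1 / t))) (at t)"
proof -
  have d1: "((\<lambda>t. 1 / t) has_real_derivative (- 1 / t\<^sup>2)) (at t)"
    using assms by (auto intro!: derivative_eq_intros simp: power2_eq_square field_simps)
  have d2: "((\<lambda>t. poly p (1 / t)) has_real_derivative poly (pderiv p) (1 / t) * (- 1 / t\<^sup>2)) (at t)"
    by (rule DERIV_chain2[OF poly_DERIV d1])
  have d3: "((\<lambda>t. exp (- (1 / t))) has_real_derivative exp (- (1 / t)) * (- (- 1 / t\<^sup>2))) (at t)"
    by (rule DERIV_chain2[OF DERIV_exp]) (intro derivative_intros d1)
  have "((\<lambda>t. poly p (1 / t) * exp (- (1 / t))) has_real_derivative
     poly (pderiv p) (1 / t) * (- 1 / t\<^sup>2) * exp (- (1 / t)) + poly p (1 / t) * (exp (- (1 / t)) * (- (- 1 / t\<^sup>2)))) (at t)"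
    using DERIV_mult[OF d2 d3] by (simp add: mult_ac)
  moreover have "poly (pderiv p) (1 / t) * (- 1 / t\<^sup>2) * exp (- (1 / t)) + poly p (1 / t) * (exp (- (1 / t)) * (- (- 1 / t\<^sup>2)))
      = poly ([:0, 0, 1:] * (p - pderiv p)) (1 / t) * exp (- (1 / t))"
    using assms by (simp add: power2_eq_square divide_simps) (simp add: algebra_simps)
  ultimately show ?thesis by simp
qed

lemma flat_has_derivative: "(flat k has_real_derivative flat (Suc k) t) (at t)"
proof (cases "t > 0")
  case True
  have "((\<lambda>t. poly (flat_poly k) (1 / t) * exp (- (1 / t))) has_real_derivative flat (Suc k) t) (at t)"
    using has_real_derivative_poly_inverse_exp[OF True, of "flat_poly k"] True by (simp add: flat_def)
  then show ?thesis
    by (rule has_field_derivative_transform_within_open[where S="{0<..}"]) (use True in \<open>auto simp: flat_def\<close>)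
next
  case False
  show ?thesis
  proof (cases "t < 0")
    case True
    have "((\<lambda>t. 0) has_real_derivative 0) (at t)" by simp
    then have "(flat k has_real_derivative 0) (at t)"
      by (rule has_field_derivative_transform_within_open[where S="{..<0}"]) (use True in \<open>auto simp: flat_def\<close>)
    then show ?thesis using True by (simp add: flat_def)
  next
    case False
    with \<open>\<not> t > 0\<close> have t0: "t = 0" by simp
    have "((\<lambda>h. (flat k (0 + h) - flat k 0) / h) \<longlongrightarrow> 0) (at 0)"
      unfolding filterlim_at_split
    proof
      have "((\<lambda>h. 0::real) \<longlongrightarrow> 0) (at_left 0)" by simp
      then show "((\<lambda>h. (flat k (0 + h) - flat k 0) / h) \<longlongrightarrow> 0) (at_left 0)"
        by (rule Lim_transform_eventually) (auto simp: flat_def eventually_at_left_field intro: exI[of _ "-1"])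
    next
      have "((\<lambda>u. u ^ 1 * poly (flat_poly k) u * exp (- u)) \<longlongrightarrow> (0::real)) at_top"
        by (rule tendsto_poly_exp_at_top)
      then have "((\<lambda>x. (flat k (0 + inverse x) - flat k 0) / inverse x) \<longlongrightarrow> 0) at_top"
        by (rule Lim_transform_eventually)
          (auto simp: flat_def eventually_at_top_dense divide_inverse mult_ac intro!: exI[of _ 0])
      then show "((\<lambda>h. (flat k (0 + h) - flat k 0) / h) \<longlongrightarrow> 0) (at_right 0)"
        unfolding filterlim_at_right_to_top by simp
    qed
    then have "(flat k has_real_derivative 0) (at 0)" by (simp add: DERIV_def)
    then show ?thesis using t0 by (simp add: flat_def)
  qed
qed

lemma derivative_sequence_flat: "derivative_sequence flat"
  unfolding derivative_sequence_def using flat_has_derivative by blast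

lemma flat_0: "flat 0 t = (if t > 0 then exp (- (1 / t)) else 0)"
  by (simp add: flat_def)

lemma flat_0_bounds: "0 \<le> flat 0 t" "flat 0 t \<le> 1"
  by (auto simp: flat_0)

lemma flat_0_tendsto: "t > 0 \<Longrightarrow> (\<lambda>n. flat 0 (real n * t)) \<longlonglongrightarrow> 1"
proof -
  assume t: "t > 0"
  have "((\<lambda>n. exp (- (1 / t) * inverse (real n))) \<longlonglongrightarrow> exp (- (1 / t) * 0))"
    by (intro tendsto_intros lim_inverse_n)
  then have "((\<lambda>n. exp (- (1 / t) * inverse (real n))) \<longlonglongrightarrow> 1)" by simp
  then show ?thesis
  proof (rule Lim_transform_eventually)
    show "\<forall>\<^sub>F n in sequentially. exp (- (1 / t) * inverse (real n)) = flat 0 (real n * t)"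
      using t by (auto simp: flat_0 eventually_sequentially field_simps intro!: exI[of _ 1])
  qed
qed

lemma flat_0_nonpos: "t \<le> 0 \<Longrightarrow> flat 0 t = 0"
  by (simp add: flat_0)

section \<open>Test functions and integration by parts\<close>

definition supp :: "(real^'d \<Rightarrow> real) \<Rightarrow> (real^'d) set" where
  "supp f = closure {x. f x \<noteq> 0}"

lemma not_in_supp: "x \<notin> supp f \<Longrightarrow> f x = 0"
proof (rule ccontr)
  assume a: "x \<notin> supp f" "f x \<noteq> 0"
  then have "x \<in> {x. f x \<noteq> 0}" by simp
  then have "x \<in> supp f" unfolding supp_def using closure_subset by (rule subsetD[rotated])
  with a show False by simp
qed

lemma supp_closed: "closed (supp f)"
  by (simp add: supp_def)

lemma compact_closed_subset: "compact A \<Longrightarrow> B \<subseteq> A \<Longrightarrow> closed B \<Longrightarrow> compact B"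
  by (metis compact_Int_closed inf.absorb2)

lemma everywhere_differentiable_continuous: "everywhere_differentiable f \<Longrightarrow> continuous_on UNIV f"
  by (simp add: continuous_at_imp_continuous_on differentiable_imp_continuous_within)

lemma pd_not_in_supp:
  assumes "everywhere_differentiable f" "x \<notin> supp f"
  shows "pd i f x = 0"
proof -
  have "frechet_derivative f (at x) = frechet_derivative (\<lambda>y. 0) (at x)"
    by (rule frechet_derivative_transform_within_open[where X="- supp f"])
       (use assms in \<open>auto simp: supp_def intro: not_in_supp\<close>)
  then show ?thesis by (simp add: pd_def)
qed

lemma supp_pd: "everywhere_differentiable f \<Longrightarrow> supp (pd i f) \<subseteq> supp f"
  unfolding supp_def[of "pd i f"]
  by (rule closure_minimal) (auto intro: pd_not_in_supp simp: supp_def)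

lemma compact_support_bounded:
  assumes "continuous_on UNIV f" "compact (supp f)"
  shows "\<exists>M. \<forall>x. \<bar>f x\<bar> \<le> M"
proof -
  have "compact (f ` supp f)"
    using assms by (auto intro: compact_continuous_image continuous_on_subset)
  then obtain M where "\<forall>y\<in>f ` supp f. norm y \<le> M"
    using compact_imp_bounded bounded_iff by metis
  have "\<bar>f x\<bar> \<le> max M 0" for x
  proof (cases "x \<in> supp f")
    case True
    then show ?thesis using \<open>\<forall>y\<in>f ` supp f. norm y \<le> M\<close> by fastforce
  next
    case False
    then show ?thesis using not_in_supp[OF False] by simp
  qed
  then show ?thesis by blast
qed

lemma has_real_derivative_coordinate_line:
  fixes f :: "real^'d \<Rightarrow> real"
  assumes "everywhere_differentiable f"
  shows "((\<lambda>s. f (x + s *\<^sub>R axis i 1)) has_real_derivative pd i f (x + s *\<^sub>R axis i 1)) (at s)"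
proof -
  let ?v = "axis i 1 :: real^'d"
  have l: "((\<lambda>s. x + s *\<^sub>R ?v) has_derivative (\<lambda>h. h *\<^sub>R ?v)) (at s)"
    by (auto intro!: derivative_eq_intros)
  have "(f has_derivative frechet_derivative f (at (x + s *\<^sub>R ?v))) (at (x + s *\<^sub>R ?v))"
    using assms frechet_derivative_works by blast
  from has_derivative_compose[OF l this]
  have d: "((\<lambda>s. f (x + s *\<^sub>R ?v)) has_derivative (\<lambda>h. frechet_derivative f (at (x + s *\<^sub>R ?v)) (h *\<^sub>R ?v))) (at s)" .
  have lin: "linear (frechet_derivative f (at (x + s *\<^sub>R ?v)))"
    using assms frechet_derivative_works has_derivative_linear by blast
  have "(\<lambda>h. frechet_derivative f (at (x + s *\<^sub>R ?v)) (h *\<^sub>R ?v)) = (\<lambda>h. pd i f (x + s *\<^sub>R ?v) * h)"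
    using linear_scale[OF lin] by (auto simp: pd_def)
  with d show ?thesis by (simp add: has_field_derivative_def)
qed

lemma coordinate_increment_le:
  fixes f :: "real^'d \<Rightarrow> real"
  assumes "everywhere_differentiable f" "\<forall>y. \<bar>pd i f y\<bar> \<le> M"
  shows "\<bar>f (x + t *\<^sub>R axis i 1) - f x\<bar> \<le> M * \<bar>t\<bar>"
proof -
  let ?g = "\<lambda>s. f (x + s *\<^sub>R axis i 1)"
  have der: "\<And>s. (?g has_real_derivative pd i f (x + s *\<^sub>R axis i 1)) (at s)"
    using has_real_derivative_coordinate_line[OF assms(1)] .
  consider "t = 0" | "t > 0" | "t < 0" by linarith
  then show ?thesis
  proof cases
    case 1 then show ?thesis by simp
  next
    case 2
    obtain z where "?g t - ?g 0 = (t - 0) * pd i f (x + z *\<^sub>R axis i 1)"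
      using MVT2[OF 2 der] by blast
    then have "\<bar>?g t - ?g 0\<bar> = \<bar>t\<bar> * \<bar>pd i f (x + z *\<^sub>R axis i 1)\<bar>" by (simp add: abs_mult)
    also have "\<dots> \<le> \<bar>t\<bar> * M" using assms(2) by (intro mult_left_mono) auto
    finally show ?thesis by (simp add: mult.commute)
  next
    case 3
    obtain z where "?g 0 - ?g t = (0 - t) * pd i f (x + z *\<^sub>R axis i 1)"
      using MVT2[OF 3 der] by blast
    then have "?g t - ?g 0 = t * pd i f (x + z *\<^sub>R axis i 1)" by simp
    then have "\<bar>?g t - ?g 0\<bar> = \<bar>t\<bar> * \<bar>pd i f (x + z *\<^sub>R axis i 1)\<bar>" by (simp add: abs_mult)
    also have "\<dots> \<le> \<bar>t\<bar> * M" using assms(2) by (intro mult_left_mono) auto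
    finally show ?thesis by (simp add: mult.commute)
  qed
qed

lemma continuous_on_UNIV_borel_measurable: "continuous_on UNIV f \<Longrightarrow> f \<in> borel_measurable lborel"
  using borel_measurable_continuous_onI by simp

lemma integrable_compact_support:
  fixes f :: "real^'d \<Rightarrow> real"
  assumes "continuous_on UNIV f" "compact (supp f)"
  shows "integrable lborel f"
proof -
  have "integrable lborel (\<lambda>x. indicator (supp f) x *\<^sub>R f x)"
    using assms by (intro borel_integrable_compact) (auto intro: continuous_on_subset)
  moreover have "(\<lambda>x. indicator (supp f) x *\<^sub>R f x) = f"
    using not_in_supp by (fastforce simp: indicator_def)
  ultimately show ?thesis by simp
qed

lemma integral_lborel_translate:
  fixes f :: "real^'d \<Rightarrow> real"
  assumes "f \<in> borel_measurable lborel"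
  shows "integral\<^sup>L lborel (\<lambda>x. f (c + x)) = integral\<^sup>L lborel f"
proof -
  have m: "(+) c \<in> measurable lborel (borel :: (real^'d) measure)"
    by (simp add: borel_measurable_continuous_onI continuous_on_add continuous_on_const continuous_on_id)
  have mf: "f \<in> borel_measurable borel" using assms by simp
  have "integral\<^sup>L lborel f = integral\<^sup>L (distr lborel borel ((+) c)) f"
    by (simp add: lborel_distr_plus)
  also have "\<dots> = integral\<^sup>L lborel (\<lambda>x. f (c + x))"
    by (rule integral_distr[OF m mf])
  finally show ?thesis by simp
qed

lemma integrable_lborel_translate:
  fixes f :: "real^'d \<Rightarrow> real"
  assumes "integrable lborel f"
  shows "integrable lborel (\<lambda>x. f (c + x))"
proof -
  have m: "(+) c \<in> measurable lborel (borel :: (real^'d) measure)"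
    by (simp add: borel_measurable_continuous_onI continuous_on_add continuous_on_const continuous_on_id)
  have mf: "f \<in> borel_measurable borel" using assms borel_measurable_integrable by simp
  have "integrable (distr lborel borel ((+) c)) f"
    using assms by (simp add: lborel_distr_plus)
  then show ?thesis
    using integrable_distr_eq[OF m mf] by simp
qed

lemma difference_quotient_bound:
  fixes f :: "real^'d \<Rightarrow> real"
  assumes D: "everywhere_differentiable f" and M: "\<forall>y. \<bar>pd i f y\<bar> \<le> M" and t: "0 < t" "t \<le> 1"
  shows "\<bar>(f (t *\<^sub>R axis i 1 + x) - f x) / t\<bar> \<le> indicator {a + b | a b. a \<in> supp f \<and> b \<in> cball 0 1} x *\<^sub>R M"
proof (cases "x \<in> {a + b | a b. a \<in> supp f \<and> b \<in> cball 0 1}")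
  case True
  have "\<bar>f (x + t *\<^sub>R axis i 1) - f x\<bar> \<le> M * \<bar>t\<bar>" by (rule coordinate_increment_le[OF D M])
  then show ?thesis using True t by (simp add: add.commute divide_le_eq)
next
  case False
  have "x \<notin> supp f"
  proof
    assume "x \<in> supp f"
    then have "x \<in> {a + b | a b. a \<in> supp f \<and> b \<in> cball 0 1}"
      by (intro CollectI exI[of _ x] exI[of _ 0]) simp
    with False show False by blast
  qed
  moreover have "t *\<^sub>R axis i 1 + x \<notin> supp f"
  proof
    assume "t *\<^sub>R axis i 1 + x \<in> supp f"
    moreover have "- (t *\<^sub>R axis i 1) \<in> cball (0::real^'d) 1" using t by simp
    ultimately have "(t *\<^sub>R axis i 1 + x) + - (t *\<^sub>R axis i 1) \<in> {a + b | a b. a \<in> supp f \<and> b \<in> cball 0 1}"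
      by blast
    with False show False by auto
  qed
  ultimately show ?thesis using False by (simp add: not_in_supp)
qed

text \<open>The difference quotients of \<open>f\<close> have integral \<open>0\<close> by translation invariance; they converge
  to \<open>\<partial>\<^sub>if\<close> under a common compactly supported bound.\<close>

lemma integral_pd_compact_support:
  fixes f :: "real^'d \<Rightarrow> real"
  assumes D: "everywhere_differentiable f" and D': "everywhere_differentiable (pd i f)" and K: "compact (supp f)"
  shows "integral\<^sup>L lborel (pd i f) = 0"
proof -
  let ?v = "axis i 1 :: real^'d"
  define K' where "K' = {a + b | a b. a \<in> supp f \<and> b \<in> cball (0::real^'d) 1}"
  define t where "t = (\<lambda>n. inverse (real (Suc n)))"
  define s where "s n x = (f (t n *\<^sub>R ?v + x) - f x) / t n" for n x
  have cf: "continuous_on UNIV f" using D by (rule everywhere_differentiable_continuous)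
  have cpd: "continuous_on UNIV (pd i f)" using D' by (rule everywhere_differentiable_continuous)
  have "compact (supp (pd i f))"
    using compact_closed_subset[OF K supp_pd[OF D] supp_closed] .
  then obtain M where M: "\<forall>y. \<bar>pd i f y\<bar> \<le> M" using compact_support_bounded[OF cpd] by blast
  have tpos: "t n > 0" "t n \<le> 1" for n by (auto simp: t_def field_simps)
  have intf: "integrable lborel f" by (rule integrable_compact_support[OF cf K])
  have mf: "f \<in> borel_measurable lborel" by (rule continuous_on_UNIV_borel_measurable[OF cf])
  have s0: "integral\<^sup>L lborel (s n) = 0" for n
    unfolding s_def using intf integrable_lborel_translate[OF intf]
    by (simp add: integral_lborel_translate[OF mf])
  have ms: "s n \<in> borel_measurable lborel" for n
    unfolding s_def by (intro borel_measurable_divide borel_measurable_diff measurable_compose[OF _ mf] mf) auto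
  have lim: "(\<lambda>n. s n x) \<longlonglongrightarrow> pd i f x" for x
  proof -
    have "((\<lambda>h. (f (x + (0 + h) *\<^sub>R ?v) - f (x + 0 *\<^sub>R ?v)) / h) \<longlongrightarrow> pd i f (x + 0 *\<^sub>R ?v)) (at 0)"
      using has_real_derivative_coordinate_line[OF D, of x i 0] by (simp add: DERIV_def)
    then have "((\<lambda>h. (f (h *\<^sub>R ?v + x) - f x) / h) \<longlongrightarrow> pd i f x) (at 0)"
      by (simp add: add.commute)
    moreover have "filterlim t (at 0) sequentially"
      unfolding filterlim_at t_def using LIMSEQ_inverse_real_of_nat by auto
    ultimately show ?thesis using filterlim_compose by (fastforce simp: s_def o_def)
  qed
  have "(\<lambda>n. integral\<^sup>L lborel (s n)) \<longlonglongrightarrow> integral\<^sup>L lborel (pd i f)"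
  proof (rule integral_dominated_convergence[OF continuous_on_UNIV_borel_measurable[OF cpd] ms])
    show "integrable lborel (\<lambda>x. indicator K' x *\<^sub>R M)"
      unfolding K'_def by (intro borel_integrable_compact compact_sums K compact_cball) auto
    show "AE x in lborel. norm (s n x) \<le> indicator K' x *\<^sub>R M" for n
      using difference_quotient_bound[OF D M tpos] by (simp add: s_def K'_def)
  qed (use lim in auto)
  then show ?thesis by (simp add: s0 LIMSEQ_const_iff)
qed

lemma test_fun_iff: "test_fun \<Omega> \<phi> \<longleftrightarrow> smooth_on UNIV \<phi> \<and> compact (supp \<phi>) \<and> supp \<phi> \<subseteq> \<Omega>"
  by (simp add: test_fun_def supp_def)

lemma supp_add: "supp (\<lambda>x. f x + g x) \<subseteq> supp f \<union> supp g"
proof -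
  have "{x. f x + g x \<noteq> 0} \<subseteq> {x. f x \<noteq> 0} \<union> {x. g x \<noteq> 0}" by auto
  then have "closure {x. f x + g x \<noteq> 0} \<subseteq> closure ({x. f x \<noteq> 0} \<union> {x. g x \<noteq> 0})" by (rule closure_mono)
  then show ?thesis by (simp add: supp_def closure_Un)
qed

lemma supp_mult: "supp (\<lambda>x. f x * g x) \<subseteq> supp f"
  unfolding supp_def by (rule closure_mono) auto

lemma supp_mult2: "supp (\<lambda>x. f x * g x) \<subseteq> supp g"
  unfolding supp_def by (rule closure_mono) auto

lemma test_fun_add: "test_fun \<Omega> f \<Longrightarrow> test_fun \<Omega> g \<Longrightarrow> test_fun \<Omega> (\<lambda>x. f x + g x)"
  unfolding test_fun_iff using supp_add[of f g]
  by (auto intro: smooth_add compact_closed_subset[OF compact_Un] supp_closed)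

lemma test_fun_mult: "test_fun \<Omega> f \<Longrightarrow> smooth_on UNIV g \<Longrightarrow> test_fun \<Omega> (\<lambda>x. f x * g x)"
  unfolding test_fun_iff using supp_mult[of f g]
  by (auto intro: smooth_mult compact_closed_subset supp_closed)

lemma test_fun_scale: "test_fun \<Omega> f \<Longrightarrow> test_fun \<Omega> (\<lambda>x. c * f x)"
proof -
  assume "test_fun \<Omega> f"
  from test_fun_mult[OF this smooth_const] show ?thesis by (simp add: mult.commute)
qed

lemma test_fun_zero: "test_fun \<Omega> (\<lambda>x. 0)"
  unfolding test_fun_iff by (simp add: smooth_const supp_def)

lemma test_fun_sum: "finite B \<Longrightarrow> (\<And>b. b \<in> B \<Longrightarrow> test_fun \<Omega> (F b)) \<Longrightarrow> test_fun \<Omega> (\<lambda>x. \<Sum>b\<in>B. F b x)"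
proof (induction B rule: finite_induct)
  case empty then show ?case by (simp add: test_fun_zero)
next
  case (insert b B) then show ?case by (simp add: test_fun_add)
qed

lemma test_fun_pd: "test_fun \<Omega> f \<Longrightarrow> test_fun \<Omega> (pd i f)"
  unfolding test_fun_iff using supp_pd[of f i] smooth_differentiable
  by (auto intro: smooth_pd compact_closed_subset supp_closed)

lemma test_fun_differentiable: "test_fun \<Omega> f \<Longrightarrow> everywhere_differentiable f"
  unfolding test_fun_iff using smooth_differentiable by blast

lemma test_fun_continuous: "test_fun \<Omega> f \<Longrightarrow> continuous_on UNIV f"
  using test_fun_differentiable everywhere_differentiable_continuous by blast

lemma test_fun_outside: "test_fun \<Omega> f \<Longrightarrow> x \<notin> \<Omega> \<Longrightarrow> f x = 0"
  unfolding test_fun_iff using not_in_supp by blast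

lemma pd_lincomb:
  "finite B \<Longrightarrow> (\<And>b. b \<in> B \<Longrightarrow> everywhere_differentiable (F b)) \<Longrightarrow>
    pd i (\<lambda>x. \<Sum>b\<in>B. c b * F b x) = (\<lambda>x. \<Sum>b\<in>B. c b * pd i (F b) x)"
proof (induction B rule: finite_induct)
  case (insert b B)
  have "everywhere_differentiable (\<lambda>x. c b * F b x)" "everywhere_differentiable (\<lambda>x. \<Sum>b\<in>B. c b * F b x)"
    using insert by (auto intro!: differentiable_sum differentiable_mult)
  then show ?case using insert by (auto simp: pd_add pd_scale)
qed (auto simp: pd_const)

lemma open_sets_lebesgue: "open \<Omega> \<Longrightarrow> \<Omega> \<in> sets lebesgue"
  by (simp add: borel_open sets_completionI_sets)

lemma borel_measurable_lebesgue_on: "f \<in> borel_measurable lborel \<Longrightarrow> f \<in> borel_measurable (lebesgue_on \<Omega>)"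
  by (intro measurable_restrict_space1 measurable_completion)

lemma integral_lebesgue_on_lborel:
  fixes f :: "real^'d \<Rightarrow> real"
  assumes \<Omega>: "\<Omega> \<in> sets lebesgue" and f: "f \<in> borel_measurable lborel" and z: "\<And>x. x \<notin> \<Omega> \<Longrightarrow> f x = 0"
  shows "integral\<^sup>L (lebesgue_on \<Omega>) f = integral\<^sup>L lborel f"
proof -
  have "integral\<^sup>L (lebesgue_on \<Omega>) f = integral\<^sup>L lebesgue (\<lambda>x. indicator \<Omega> x *\<^sub>R f x)"
    using integral_restrict_space[of \<Omega> lebesgue f] \<Omega> by simp
  also have "(\<lambda>x. indicator \<Omega> x *\<^sub>R f x) = f"
  proof
    fix x show "indicator \<Omega> x *\<^sub>R f x = f x" using z[of x] by (cases "x \<in> \<Omega>") auto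
  qed
  also have "integral\<^sup>L lebesgue f = integral\<^sup>L lborel f"
    using f by (intro integral_completion) simp
  finally show ?thesis .
qed

lemma integrable_lebesgue_on_lborel:
  assumes \<Omega>: "\<Omega> \<in> sets lebesgue" and f: "integrable lborel f"
  shows "integrable (lebesgue_on \<Omega>) (f :: real^'d \<Rightarrow> real)"
proof -
  have m: "f \<in> borel_measurable lborel" using f by simp
  have "integrable lebesgue f" using f m by (simp add: integrable_completion)
  then have "integrable lebesgue (\<lambda>x. indicator \<Omega> x *\<^sub>R f x)"
    using \<Omega> by (intro integrable_mult_indicator) auto
  then show ?thesis using \<Omega> by (subst integrable_restrict_space) auto
qed

lemma test_fun_L2:
  assumes "open \<Omega>" "test_fun \<Omega> f"
  shows "L2 \<Omega> f"
proof -
  have c: "continuous_on UNIV f" using assms(2) by (rule test_fun_continuous)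
  have K: "compact (supp f)" using assms(2) by (simp add: test_fun_iff)
  have c2: "continuous_on UNIV (\<lambda>x. (f x)\<^sup>2)" using c by (intro continuous_intros)
  have K2: "compact (supp (\<lambda>x. (f x)\<^sup>2))"
    by (rule compact_closed_subset[OF K _ supp_closed]) (auto simp: supp_def power2_eq_square intro!: closure_mono)
  show ?thesis unfolding L2_def
    using borel_measurable_lebesgue_on[OF continuous_on_UNIV_borel_measurable[OF c]] integrable_lebesgue_on_lborel[OF open_sets_lebesgue[OF assms(1)] integrable_compact_support[OF c2 K2]]
    by simp
qed

lemma ip_test_fun_lborel:
  assumes "open \<Omega>" "test_fun \<Omega> f" "test_fun \<Omega> g"
  shows "ip \<Omega> f g = integral\<^sup>L lborel (\<lambda>x. f x * g x)"
  unfolding ip_def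
  using assms test_fun_outside[OF assms(2)]
  by (intro integral_lebesgue_on_lborel open_sets_lebesgue continuous_on_UNIV_borel_measurable continuous_intros test_fun_continuous) auto

lemma ip_pd_test_fun:
  assumes \<Omega>: "open \<Omega>" and f: "test_fun \<Omega> f" and g: "test_fun \<Omega> g"
  shows "ip \<Omega> f (pd i g) = - ip \<Omega> (pd i f) g"
proof -
  have fg: "test_fun \<Omega> (\<lambda>x. f x * g x)" using test_fun_mult[OF f, of g] g by (simp add: test_fun_iff)
  have Df: "everywhere_differentiable f" "everywhere_differentiable g" using f g test_fun_differentiable by auto
  have pfg: "pd i (\<lambda>x. f x * g x) = (\<lambda>x. pd i f x * g x + f x * pd i g x)"
    by (rule pd_mult_fun[OF Df])
  have "integral\<^sup>L lborel (pd i (\<lambda>x. f x * g x)) = 0"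
    using fg test_fun_differentiable[OF test_fun_pd[OF fg]] test_fun_differentiable[OF fg] by (intro integral_pd_compact_support) (auto simp: test_fun_iff)
  then have "integral\<^sup>L lborel (\<lambda>x. pd i f x * g x + f x * pd i g x) = 0" by (simp add: pfg)
  moreover have i1: "integrable lborel (\<lambda>x. pd i f x * g x)"
  proof (rule integrable_compact_support)
    show "continuous_on UNIV (\<lambda>x. pd i f x * g x)"
      using test_fun_continuous[OF test_fun_pd[OF f]] test_fun_continuous[OF g] by (rule continuous_on_mult)
    show "compact (supp (\<lambda>x. pd i f x * g x))"
      by (rule compact_closed_subset[OF _ supp_mult2 supp_closed]) (use g in \<open>simp add: test_fun_iff\<close>)
  qed
  moreover have i2: "integrable lborel (\<lambda>x. f x * pd i g x)"
  proof (rule integrable_compact_support)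
    show "continuous_on UNIV (\<lambda>x. f x * pd i g x)"
      using test_fun_continuous[OF f] test_fun_continuous[OF test_fun_pd[OF g]] by (rule continuous_on_mult)
    show "compact (supp (\<lambda>x. f x * pd i g x))"
      by (rule compact_closed_subset[OF _ supp_mult supp_closed]) (use f in \<open>simp add: test_fun_iff\<close>)
  qed
  ultimately have "integral\<^sup>L lborel (\<lambda>x. pd i f x * g x) + integral\<^sup>L lborel (\<lambda>x. f x * pd i g x) = 0"
    by simp
  moreover have "ip \<Omega> f (pd i g) = integral\<^sup>L lborel (\<lambda>x. f x * pd i g x)"
    by (rule ip_test_fun_lborel[OF \<Omega> f test_fun_pd[OF g]])
  moreover have "ip \<Omega> (pd i f) g = integral\<^sup>L lborel (\<lambda>x. pd i f x * g x)"
    by (rule ip_test_fun_lborel[OF \<Omega> test_fun_pd[OF f] g])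
  ultimately show ?thesis by simp
qed

lemma test_fun_is_wgrad:
  assumes "open \<Omega>" "test_fun \<Omega> f"
  shows "is_wgrad \<Omega> f (\<lambda>i. pd i f)"
  unfolding is_wgrad_def using assms
  by (auto intro: test_fun_L2 test_fun_pd ip_pd_test_fun)

section \<open>The fundamental lemma of the calculus of variations\<close>

definition bump :: "nat \<Rightarrow> real^'d \<Rightarrow> real^'d \<Rightarrow> real^'d \<Rightarrow> real" where
  "bump n a b x = (\<Prod>i\<in>UNIV. flat 0 (real n * x $ i + - (real n * a $ i)) * flat 0 ((- real n) * x $ i + real n * b $ i))"

lemma smooth_bump: "smooth_on UNIV (bump n a b)"
  unfolding bump_def[abs_def]
  by (intro smooth_prod smooth_mult smooth_derivative_sequence_coordinate derivative_sequence_flat) auto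

lemma bump_nonzero: "bump n a b x \<noteq> 0 \<Longrightarrow> x \<in> box a b"
proof -
  assume nz: "bump n a b x \<noteq> 0"
  have "a $ i < x $ i \<and> x $ i < b $ i" for i
  proof -
    have f1: "flat 0 (real n * x $ i + - (real n * a $ i)) \<noteq> 0" and f2: "flat 0 ((- real n) * x $ i + real n * b $ i) \<noteq> 0"
      using nz unfolding bump_def by auto
    then have p1: "real n * x $ i + - (real n * a $ i) > 0" and p2: "(- real n) * x $ i + real n * b $ i > 0"
      using flat_0_nonpos by (metis not_le)+
    then have "real n * (x $ i - a $ i) > 0" "real n * (b $ i - x $ i) > 0" by (simp_all add: algebra_simps)
    then show ?thesis by (simp add: zero_less_mult_iff)
  qed
  then show ?thesis by (simp add: mem_box_cart)
qed

lemma supp_bump: "supp (bump n a b) \<subseteq> cbox a b"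
  unfolding supp_def
proof (rule closure_minimal)
  show "{x. bump n a b x \<noteq> 0} \<subseteq> cbox a b" using bump_nonzero box_subset_cbox by blast
qed (rule closed_cbox)

lemma test_fun_bump: "cbox a b \<subseteq> \<Omega> \<Longrightarrow> test_fun \<Omega> (bump n a b)"
  unfolding test_fun_iff using supp_bump[of n a b]
  by (auto intro: smooth_bump compact_closed_subset[OF compact_cbox] supp_closed)

lemma bump_bounds: "0 \<le> bump n a b x" "bump n a b x \<le> 1"
  unfolding bump_def using flat_0_bounds
  by (auto intro!: prod_nonneg prod_le_1 mult_le_one)

lemma bump_tendsto_indicator:
  fixes a b x :: "real^'d"
  shows "(\<lambda>n. bump n a b x) \<longlonglongrightarrow> indicator (box a b) x"
proof (cases "x \<in> box a b")
  case True
  then have ab: "a $ i < x $ i" "x $ i < b $ i" for i by (auto simp: mem_box_cart)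
  have l: "(\<lambda>n. flat 0 (real n * x $ i + - (real n * a $ i)) * flat 0 ((- real n) * x $ i + real n * b $ i)) \<longlonglongrightarrow> 1 * 1" for i
  proof (intro tendsto_mult)
    have "(\<lambda>n. flat 0 (real n * (x $ i - a $ i))) \<longlonglongrightarrow> 1" using ab by (intro flat_0_tendsto) simp
    then show "(\<lambda>n. flat 0 (real n * x $ i + - (real n * a $ i))) \<longlonglongrightarrow> 1" by (simp add: algebra_simps)
    have "(\<lambda>n. flat 0 (real n * (b $ i - x $ i))) \<longlonglongrightarrow> 1" using ab by (intro flat_0_tendsto) simp
    then show "(\<lambda>n. flat 0 ((- real n) * x $ i + real n * b $ i)) \<longlonglongrightarrow> 1" by (simp add: algebra_simps)
  qed
  define G where "G i n = flat 0 (real n * x $ i + - (real n * a $ i)) * flat 0 ((- real n) * x $ i + real n * b $ i)" for i n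
  have l': "G i \<longlonglongrightarrow> 1 * 1" for i unfolding G_def[abs_def] by (rule l)
  have "(\<lambda>n. \<Prod>i\<in>UNIV. G i n) \<longlonglongrightarrow> (\<Prod>i\<in>(UNIV::'d set). 1 * 1)"
    apply (rule tendsto_prod) using l' by simp
  then have "(\<lambda>n. bump n a b x) \<longlonglongrightarrow> (\<Prod>i\<in>(UNIV::'d set). 1 * 1)"
    unfolding bump_def G_def .
  then show ?thesis using True by simp
next
  case False
  then obtain i where i: "\<not> (a $ i < x $ i \<and> x $ i < b $ i)" by (auto simp: mem_box_cart)
  have "bump n a b x = 0" for n
  proof -
    have "flat 0 (real n * x $ i + - (real n * a $ i)) * flat 0 ((- real n) * x $ i + real n * b $ i) = 0"
    proof (cases "x $ i \<le> a $ i")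
      case True
      have "real n * x $ i + - (real n * a $ i) = real n * (x $ i - a $ i)" by (simp add: algebra_simps)
      also have "\<dots> \<le> 0" using True by (simp add: mult_nonneg_nonpos)
      finally show ?thesis by (simp add: flat_0_nonpos)
    next
      case False
      with i have "b $ i \<le> x $ i" by simp
      have "(- real n) * x $ i + real n * b $ i = real n * (b $ i - x $ i)" by (simp add: algebra_simps)
      also have "\<dots> \<le> 0" using \<open>b $ i \<le> x $ i\<close> by (simp add: mult_nonneg_nonpos)
      finally show ?thesis by (simp add: flat_0_nonpos)
    qed
    then show ?thesis unfolding bump_def by (intro prod_zero) auto
  qed
  then show ?thesis using False by simp
qed

lemma finite_measure_lebesgue_on:
  assumes "open \<Omega>" "bounded \<Omega>"
  shows "finite_measure (lebesgue_on (\<Omega> :: (real^'d) set))"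
proof
  have "emeasure lborel \<Omega> < \<infinity>" using assms(2) by (rule emeasure_bounded_finite)
  moreover have "emeasure lebesgue \<Omega> = emeasure lborel \<Omega>"
    using assms(1) by (simp add: borel_open)
  ultimately show "emeasure (lebesgue_on \<Omega>) (space (lebesgue_on \<Omega>)) \<noteq> \<infinity>"
    using assms(1) by (simp add: emeasure_restrict_space open_sets_lebesgue)
qed

lemma L2_integrable:
  assumes "open \<Omega>" "bounded \<Omega>" "L2 \<Omega> f"
  shows "integrable (lebesgue_on \<Omega>) f"
proof -
  interpret finite_measure "lebesgue_on \<Omega>" using finite_measure_lebesgue_on[OF assms(1,2)] .
  show ?thesis
  proof (rule Bochner_Integration.integrable_bound)
    show "integrable (lebesgue_on \<Omega>) (\<lambda>x. 1 + (f x)\<^sup>2)" using assms(3) by (simp add: L2_def)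
    show "f \<in> borel_measurable (lebesgue_on \<Omega>)" using assms(3) by (simp add: L2_def)
    show "AE x in lebesgue_on \<Omega>. norm (f x) \<le> norm (1 + (f x)\<^sup>2)"
    proof (rule AE_I2)
      fix x
      have "2 * \<bar>1 * f x\<bar> \<le> 1\<^sup>2 + (f x)\<^sup>2" by (rule two_abs_mult_le)
      then show "norm (f x) \<le> norm (1 + (f x)\<^sup>2)" by simp
    qed
  qed
qed

lemma integral_box_eq_0:
  assumes \<Omega>: "open \<Omega>" "bounded \<Omega>" and D: "L2 \<Omega> D"
    and orth: "\<And>\<psi>. test_fun \<Omega> \<psi> \<Longrightarrow> ip \<Omega> D \<psi> = 0"
    and ab: "cbox a b \<subseteq> \<Omega>"
  shows "integral\<^sup>L (lebesgue_on \<Omega>) (\<lambda>x. D x * indicator (box a b) x) = 0"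
proof -
  have intD: "integrable (lebesgue_on \<Omega>) D" by (rule L2_integrable[OF \<Omega> D])
  have mD: "D \<in> borel_measurable (lebesgue_on \<Omega>)" using D by (simp add: L2_def)
  have mb: "bump n a b \<in> borel_measurable (lebesgue_on \<Omega>)" for n
    by (intro borel_measurable_lebesgue_on continuous_on_UNIV_borel_measurable test_fun_continuous[OF test_fun_bump[OF ab]])
  have "(\<lambda>n. integral\<^sup>L (lebesgue_on \<Omega>) (\<lambda>x. D x * bump n a b x)) \<longlonglongrightarrow> integral\<^sup>L (lebesgue_on \<Omega>) (\<lambda>x. D x * indicator (box a b) x)"
  proof (rule integral_dominated_convergence[where w="\<lambda>x. norm (D x)"])
    show "(\<lambda>x. D x * indicator (box a b) x) \<in> borel_measurable (lebesgue_on \<Omega>)"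
    proof -
      have mi: "indicator (box a b) \<in> borel_measurable (lebesgue_on \<Omega>)"
        by (intro borel_measurable_lebesgue_on borel_measurable_indicator) (simp add: borel_open)
      show ?thesis using borel_measurable_times[OF mD mi] .
    qed
    show "(\<lambda>x. D x * bump n a b x) \<in> borel_measurable (lebesgue_on \<Omega>)" for n
      using mD mb by (rule borel_measurable_times)
    show "integrable (lebesgue_on \<Omega>) (\<lambda>x. norm (D x))" using intD by simp
    show "AE x in lebesgue_on \<Omega>. (\<lambda>n. D x * bump n a b x) \<longlonglongrightarrow> D x * indicator (box a b) x"
      by (intro AE_I2 tendsto_mult tendsto_const bump_tendsto_indicator)
    show "AE x in lebesgue_on \<Omega>. norm (D x * bump n a b x) \<le> norm (D x)" for n
      using bump_bounds[of n a b] by (intro AE_I2) (auto simp: abs_mult intro: mult_left_le)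
  qed
  moreover have "integral\<^sup>L (lebesgue_on \<Omega>) (\<lambda>x. D x * bump n a b x) = 0" for n
    using orth[OF test_fun_bump[OF ab]] by (simp add: ip_def)
  ultimately show ?thesis by (simp add: LIMSEQ_const_iff)
qed

lemma open_Union_boxes:
  fixes M :: "(real^'d) set"
  assumes "open M"
  obtains \<D> where "countable \<D>" "\<And>X. X \<in> \<D> \<Longrightarrow> \<exists>a b. X = box a b \<and> cbox a b \<subseteq> M" "\<Union>\<D> = M"
proof -
  let ?a = "\<lambda>f. (\<Sum>(i::real^'d)\<in>Basis. fst (f i) *\<^sub>R i)"
  let ?b = "\<lambda>f. (\<Sum>(i::real^'d)\<in>Basis. snd (f i) *\<^sub>R i)"
  let ?I = "{f\<in>Basis \<rightarrow>\<^sub>E \<rat> \<times> \<rat>. cbox (?a f) (?b f) \<subseteq> M}"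
  let ?\<D> = "(\<lambda>f. box (?a f) (?b f)) ` ?I"
  show ?thesis
  proof
    have "countable ?I" by (simp add: countable_PiE countable_rat)
    then show "countable ?\<D>" by blast
    show "\<exists>a b. X = box a b \<and> cbox a b \<subseteq> M" if "X \<in> ?\<D>" for X using that by auto
    show "\<Union>?\<D> = M"
    proof
      show "\<Union>?\<D> \<subseteq> M" using box_subset_cbox by fastforce
      show "M \<subseteq> \<Union>?\<D>"
      proof
        fix x assume "x \<in> M"
        obtain e where e: "e > 0" "ball x e \<subseteq> M"
          using openE[OF \<open>open M\<close> \<open>x \<in> M\<close>] by auto
        obtain a b where ab: "\<forall>i\<in>Basis. a \<bullet> i \<in> \<rat> \<and> b \<bullet> i \<in> \<rat>" "x \<in> box a b" "box a b \<subseteq> ball x (e/2)"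
          using rational_boxes[of "e/2" x] e by auto
        have "box a b \<noteq> {}" using ab(2) by blast
        then have "cbox a b = closure (box a b)" by (simp add: closure_box)
        also have "\<dots> \<subseteq> closure (ball x (e/2))" using ab(3) by (rule closure_mono)
        also have "\<dots> = cball x (e/2)" using e by simp
        also have "\<dots> \<subseteq> ball x e" using e by (auto simp: subset_iff)
        finally have cb: "cbox a b \<subseteq> M" using e by blast
        let ?f = "\<lambda>i\<in>Basis. (a \<bullet> i, b \<bullet> i)"
        have f: "?f \<in> ?I" using ab cb by (auto simp: euclidean_representation)
        have "box (?a ?f) (?b ?f) = box a b" by (simp add: euclidean_representation)
        with f ab(2) show "x \<in> \<Union>?\<D>" by blast
      qed
    qed
  qed
qed

definition boxgen :: "(real^'d) set \<Rightarrow> (real^'d) set set" where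
  "boxgen \<Omega> = {box a b | a b. cbox a b \<subseteq> \<Omega>}"

lemma sets_boxgen:
  fixes \<Omega> :: "(real^'d) set"
  assumes "open \<Omega>"
  shows "(\<inter>) \<Omega> ` sets borel = sigma_sets \<Omega> (boxgen \<Omega>)"
proof -
  have "(\<inter>) \<Omega> ` sets borel = sigma_sets \<Omega> ((\<inter>) \<Omega> ` {S. open S})"
    unfolding sets_borel using assms by (intro sigma_sets_Int) auto
  also have "\<dots> = sigma_sets \<Omega> (boxgen \<Omega>)"
  proof (rule sigma_sets_eqI)
    fix A assume "A \<in> (\<inter>) \<Omega> ` {S. open S}"
    then obtain S where S: "open S" "A = \<Omega> \<inter> S" by auto
    then have "open A" using assms by auto
    then obtain \<D> where D: "countable \<D>" "\<And>X. X \<in> \<D> \<Longrightarrow> \<exists>a b. X = box a b \<and> cbox a b \<subseteq> A" "\<Union>\<D> = A"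
      using open_Union_boxes[OF \<open>open A\<close>] by blast
    have "\<Union>\<D> \<in> sigma_sets \<Omega> (boxgen \<Omega>)"
    proof (rule sigma_sets_UNION[OF D(1)])
      fix X assume "X \<in> \<D>"
      then obtain a b where "X = box a b" "cbox a b \<subseteq> A" using D(2) by blast
      then have "X \<in> boxgen \<Omega>" using S unfolding boxgen_def by blast
      then show "X \<in> sigma_sets \<Omega> (boxgen \<Omega>)" by (rule sigma_sets.Basic)
    qed
    then show "A \<in> sigma_sets \<Omega> (boxgen \<Omega>)" using D(3) by simp
  next
    fix B assume "B \<in> boxgen \<Omega>"
    then obtain a b where ab: "B = box a b" "cbox a b \<subseteq> \<Omega>" unfolding boxgen_def by blast
    then have "B = \<Omega> \<inter> box a b" using box_subset_cbox by blast
    then have "B \<in> (\<inter>) \<Omega> ` {S. open S}" by blast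
    then show "B \<in> sigma_sets \<Omega> ((\<inter>) \<Omega> ` {S. open S})" by (rule sigma_sets.Basic)
  qed
  finally show ?thesis .
qed

lemma boxgen_Int_stable:
  fixes \<Omega> :: "(real^'d) set"
  shows "Int_stable (boxgen \<Omega>)"
  unfolding Int_stable_def boxgen_def
proof (clarify)
  fix a b c d :: "real^'d"
  assume ab: "cbox a b \<subseteq> \<Omega>" and cd: "cbox c d \<subseteq> \<Omega>"
  let ?l = "\<Sum>i\<in>Basis. max (a\<bullet>i) (c\<bullet>i) *\<^sub>R i" and ?u = "\<Sum>i\<in>Basis. min (b\<bullet>i) (d\<bullet>i) *\<^sub>R i"
  have "cbox ?l ?u \<subseteq> cbox a b" by (auto simp: mem_box)
  then have "cbox ?l ?u \<subseteq> \<Omega>" using ab by blast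
  then show "\<exists>aa ba. box a b \<inter> box c d = box aa ba \<and> cbox aa ba \<subseteq> \<Omega>"
    by (intro exI[of _ ?l] exI[of _ ?u]) (simp add: box_Int_box)
qed

lemma boxgen_subset_Pow: "boxgen \<Omega> \<subseteq> Pow \<Omega>"
  unfolding boxgen_def using box_subset_cbox by blast

lemma nn_integral_indicator_le_norm: "(\<integral>\<^sup>+x. ennreal (g x) * indicator X x \<partial>M) \<le> (\<integral>\<^sup>+x. ennreal (norm (g x)) \<partial>M)"
  by (intro nn_integral_mono) (auto simp: indicator_def)

lemma nn_integral_indicator_finite:
  fixes g :: "'a \<Rightarrow> real"
  assumes "integrable M g"
  shows "(\<integral>\<^sup>+x. ennreal (g x) * indicator X x \<partial>M) < \<infinity>"
  using nn_integral_indicator_le_norm[where g=g and X=X and M=M] assms by (simp add: integrable_iff_bounded) (meson order.strict_trans1)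

lemma nn_integral_pos_eq_neg:
  fixes g :: "'a \<Rightarrow> real"
  assumes "integrable M g" "integral\<^sup>L M g = 0"
  shows "(\<integral>\<^sup>+x. ennreal (g x) \<partial>M) = (\<integral>\<^sup>+x. ennreal (- g x) \<partial>M)"
proof -
  have A: "(\<integral>\<^sup>+x. ennreal (g x) \<partial>M) < \<infinity>" using nn_integral_indicator_finite[OF assms(1), of UNIV] by simp
  have "integrable M (\<lambda>x. - g x)" using assms(1) by simp
  then have B: "(\<integral>\<^sup>+x. ennreal (- g x) \<partial>M) < \<infinity>" using nn_integral_indicator_finite[of M "\<lambda>x. - g x" UNIV] by simp
  have "enn2real (\<integral>\<^sup>+x. ennreal (g x) \<partial>M) = enn2real (\<integral>\<^sup>+x. ennreal (- g x) \<partial>M)"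
    using real_lebesgue_integral_def[OF assms(1)] assms(2) by simp
  then have e: "ennreal (enn2real (\<integral>\<^sup>+x. ennreal (g x) \<partial>M)) = ennreal (enn2real (\<integral>\<^sup>+x. ennreal (- g x) \<partial>M))"
    by simp
  have e1: "ennreal (enn2real (\<integral>\<^sup>+x. ennreal (g x) \<partial>M)) = (\<integral>\<^sup>+x. ennreal (g x) \<partial>M)"
    using A by (intro ennreal_enn2real) simp
  have e2: "ennreal (enn2real (\<integral>\<^sup>+x. ennreal (- g x) \<partial>M)) = (\<integral>\<^sup>+x. ennreal (- g x) \<partial>M)"
    using B by (intro ennreal_enn2real) simp
  from e show ?thesis unfolding e1 e2 .
qed

lemma ennreal_mult_indicator: "ennreal (h x * indicator X x) = ennreal (h x) * indicator X x"
  by (auto simp: indicator_def)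

lemma ennreal_neg_mult_indicator: "ennreal (- (h x * indicator X x)) = ennreal (- h x) * indicator X x"
  by (auto simp: indicator_def)

lemma emeasure_restrict_density_lborel:
  fixes g :: "real^'d \<Rightarrow> real"
  assumes g: "g \<in> borel_measurable borel" and \<Omega>: "\<Omega> \<in> sets borel" and X: "X \<in> sets borel" "X \<subseteq> \<Omega>"
  shows "emeasure (restrict_space (density lborel (\<lambda>x. ennreal (g x))) \<Omega>) X
    = (\<integral>\<^sup>+x. ennreal (g x) * indicator X x \<partial>lborel)"
proof -
  have "emeasure (restrict_space (density lborel (\<lambda>x. ennreal (g x))) \<Omega>) X
      = emeasure (density lborel (\<lambda>x. ennreal (g x))) X"
    using \<Omega> X by (intro emeasure_restrict_space) auto
  also have "\<dots> = (\<integral>\<^sup>+x. ennreal (g x) * indicator X x \<partial>lborel)"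
    using X g by (intro emeasure_density) auto
  finally show ?thesis .
qed

text \<open>The measures with densities \<open>h\<^sup>+\<close> and \<open>h\<^sup>-\<close> on \<open>\<Omega>\<close> agree on boxes, which generate the
  Borel sets of \<open>\<Omega>\<close> and are closed under intersection.\<close>

lemma nn_integral_pos_eq_neg_if_box_integrals_0:
  fixes h :: "real^'d \<Rightarrow> real"
  assumes \<Omega>: "open \<Omega>" and hm: "h \<in> borel_measurable borel" and hi: "integrable lborel h"
    and bx: "\<And>a b. cbox a b \<subseteq> \<Omega> \<Longrightarrow> integral\<^sup>L lborel (\<lambda>x. h x * indicator (box a b) x) = 0"
    and X: "X \<in> sets borel" "X \<subseteq> \<Omega>"
  shows "(\<integral>\<^sup>+x. ennreal (h x) * indicator X x \<partial>lborel) = (\<integral>\<^sup>+x. ennreal (- h x) * indicator X x \<partial>lborel)"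
proof -
  define M1 where "M1 = restrict_space (density lborel (\<lambda>x. ennreal (h x))) \<Omega>"
  define M2 where "M2 = restrict_space (density lborel (\<lambda>x. ennreal (- h x))) \<Omega>"
  have \<Omega>b: "\<Omega> \<in> sets borel" using \<Omega> by (simp add: borel_open)
  have em1: "emeasure M1 Y = (\<integral>\<^sup>+x. ennreal (h x) * indicator Y x \<partial>lborel)"
    and em2: "emeasure M2 Y = (\<integral>\<^sup>+x. ennreal (- h x) * indicator Y x \<partial>lborel)"
    if "Y \<in> sets borel" "Y \<subseteq> \<Omega>" for Y
    unfolding M1_def M2_def using hm \<Omega>b that by (auto intro!: emeasure_restrict_density_lborel)
  obtain \<D> where D: "countable \<D>" "\<And>Y. Y \<in> \<D> \<Longrightarrow> \<exists>a b. Y = box a b \<and> cbox a b \<subseteq> \<Omega>" "\<Union>\<D> = \<Omega>"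
    using open_Union_boxes[OF \<Omega>] by blast
  have "M1 = M2"
  proof (rule measure_eqI_generator_eq_countable[OF boxgen_Int_stable boxgen_subset_Pow])
    show "sets M1 = sigma_sets \<Omega> (boxgen \<Omega>)" "sets M2 = sigma_sets \<Omega> (boxgen \<Omega>)"
      unfolding M1_def M2_def using sets_boxgen[OF \<Omega>] by (simp_all add: sets_restrict_space)
    fix Y assume "Y \<in> boxgen \<Omega>"
    then obtain a b where ab: "Y = box a b" "cbox a b \<subseteq> \<Omega>" unfolding boxgen_def by blast
    then have Ys: "Y \<in> sets borel" "Y \<subseteq> \<Omega>" using box_subset_cbox by (auto simp: borel_open)
    have "integrable lborel (\<lambda>x. h x * indicator Y x)"
      using hi Ys by (intro integrable_real_mult_indicator) auto
    from nn_integral_pos_eq_neg[OF this] bx[OF ab(2)] ab(1)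
    have "(\<integral>\<^sup>+x. ennreal (h x * indicator Y x) \<partial>lborel) = (\<integral>\<^sup>+x. ennreal (- (h x * indicator Y x)) \<partial>lborel)"
      by simp
    then show "emeasure M1 Y = emeasure M2 Y"
      using em1[OF Ys] em2[OF Ys] by (simp add: ennreal_mult_indicator ennreal_neg_mult_indicator)
  next
    show "\<D> \<subseteq> boxgen \<Omega>" using D(2) unfolding boxgen_def by blast
    show "\<Union>\<D> = \<Omega>" "countable \<D>" by (rule D(3), rule D(1))
    fix Y assume "Y \<in> \<D>"
    then obtain a b where "Y = box a b" "cbox a b \<subseteq> \<Omega>" using D(2) by blast
    then have Ys: "Y \<in> sets borel" "Y \<subseteq> \<Omega>" using box_subset_cbox by (auto simp: borel_open)
    show "emeasure M1 Y \<noteq> \<infinity>" using em1[OF Ys] nn_integral_indicator_finite[OF hi, of Y] by simp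
  qed
  then show ?thesis using em1[OF X] em2[OF X] by simp
qed

lemma AE_nonpos_if_nn_integral_pos_eq_neg:
  fixes g :: "real^'d \<Rightarrow> real"
  assumes g: "g \<in> borel_measurable borel" and \<Omega>: "\<Omega> \<in> sets borel"
    and eq: "(\<integral>\<^sup>+x. ennreal (g x) * indicator {x\<in>\<Omega>. g x > 0} x \<partial>lborel)
      = (\<integral>\<^sup>+x. ennreal (- g x) * indicator {x\<in>\<Omega>. g x > 0} x \<partial>lborel)"
  shows "AE x in lborel. x \<in> \<Omega> \<longrightarrow> g x \<le> 0"
proof -
  let ?P = "{x\<in>\<Omega>. g x > 0}"
  have "(\<lambda>x. ennreal (- g x) * indicator ?P x) = (\<lambda>x. 0)"
    by (rule ext) (auto simp: indicator_def ennreal_neg)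
  then have "(\<integral>\<^sup>+x. ennreal (g x) * indicator ?P x \<partial>lborel) = 0" using eq by simp
  then have "AE x in lborel. ennreal (g x) * indicator ?P x = 0"
    using g \<Omega> by (subst nn_integral_0_iff_AE[symmetric]) auto
  then show ?thesis by eventually_elim (auto simp: indicator_def ennreal_eq_0_iff)
qed

lemma AE_zero_if_box_integrals_0:
  fixes h :: "real^'d \<Rightarrow> real"
  assumes \<Omega>: "open \<Omega>" and hm: "h \<in> borel_measurable borel" and hi: "integrable lborel h"
    and h0: "\<And>x. x \<notin> \<Omega> \<Longrightarrow> h x = 0"
    and bx: "\<And>a b. cbox a b \<subseteq> \<Omega> \<Longrightarrow> integral\<^sup>L lborel (\<lambda>x. h x * indicator (box a b) x) = 0"
  shows "AE x in lborel. h x = 0"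
proof -
  have \<Omega>b: "\<Omega> \<in> sets borel" using \<Omega> by (simp add: borel_open)
  have sets: "{x\<in>\<Omega>. h x > 0} \<in> sets borel" "{x\<in>\<Omega>. - h x > 0} \<in> sets borel"
    using \<Omega>b hm by auto
  have "AE x in lborel. x \<in> \<Omega> \<longrightarrow> h x \<le> 0"
    using nn_integral_pos_eq_neg_if_box_integrals_0[OF \<Omega> hm hi bx sets(1)]
    by (intro AE_nonpos_if_nn_integral_pos_eq_neg[OF hm \<Omega>b]) auto
  moreover have "AE x in lborel. x \<in> \<Omega> \<longrightarrow> - h x \<le> 0"
    using nn_integral_pos_eq_neg_if_box_integrals_0[OF \<Omega> hm hi bx sets(2)]
    by (intro AE_nonpos_if_nn_integral_pos_eq_neg[OF borel_measurable_uminus[OF hm] \<Omega>b]) auto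
  ultimately show ?thesis
  proof eventually_elim
    case (elim x)
    then show ?case using h0[of x] by (cases "x \<in> \<Omega>") auto
  qed
qed

lemma integrable_lebesgue_on_borel_representative:
  fixes D :: "real^'d \<Rightarrow> real"
  assumes \<Omega>: "\<Omega> \<in> sets borel" and iD: "integrable (lebesgue_on \<Omega>) D"
  obtains h where "h \<in> borel_measurable borel" "integrable lborel h" "\<And>x. x \<notin> \<Omega> \<Longrightarrow> h x = 0"
    "AE x in lebesgue. indicator \<Omega> x * D x = h x"
proof -
  define E where "E x = indicator \<Omega> x * D x" for x
  have \<Omega>s: "\<Omega> \<in> sets lebesgue" using \<Omega> by (simp add: sets_completionI_sets)
  have iE: "integrable lebesgue E"
    using iD integrable_restrict_space[of \<Omega> lebesgue D] \<Omega>s by (simp add: E_def[abs_def])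
  obtain g where gm: "g \<in> borel_measurable lborel" and gE: "AE x in lborel. E x = g x"
    using completion_ex_borel_measurable_real[OF borel_measurable_integrable[OF iE]] by blast
  define h where "h x = indicator \<Omega> x * g x" for x
  have hm: "h \<in> borel_measurable borel"
    unfolding h_def[abs_def] using gm \<Omega> by simp
  have "AE x in lborel. E x = h x"
    using gE by eventually_elim (auto simp: E_def h_def indicator_def)
  then have hE: "AE x in lebesgue. E x = h x" by (rule AE_completion)
  have "integrable lebesgue h"
    using hm by (intro integrable_cong_AE_imp[OF iE _ hE] measurable_completion) simp
  then have "integrable lborel h" using hm by (simp add: integrable_completion)
  moreover have "h x = 0" if "x \<notin> \<Omega>" for x using that by (simp add: h_def)
  ultimately show thesis using that hm hE by (simp add: E_def)
qed

lemma AE_zero_if_orthogonal_test_funs: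
  fixes D :: "real^'d \<Rightarrow> real"
  assumes \<Omega>: "open \<Omega>" "bounded \<Omega>" and DL: "L2 \<Omega> D"
    and orth: "\<And>\<psi>. test_fun \<Omega> \<psi> \<Longrightarrow> ip \<Omega> D \<psi> = 0"
  shows "AE x in lebesgue_on \<Omega>. D x = 0"
proof -
  have \<Omega>s: "\<Omega> \<in> sets lebesgue" using \<Omega>(1) by (rule open_sets_lebesgue)
  have \<Omega>b: "\<Omega> \<in> sets borel" using \<Omega>(1) by (simp add: borel_open)
  obtain h where hm: "h \<in> borel_measurable borel" and ih: "integrable lborel h"
    and h0: "\<And>x. x \<notin> \<Omega> \<Longrightarrow> h x = 0" and hE: "AE x in lebesgue. indicator \<Omega> x * D x = h x"
    using integrable_lebesgue_on_borel_representative[OF \<Omega>b L2_integrable[OF \<Omega> DL]] by blast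
  have mD: "D \<in> borel_measurable (lebesgue_on \<Omega>)" using DL by (simp add: L2_def)
  have mE: "(\<lambda>x. indicator \<Omega> x * D x) \<in> borel_measurable lebesgue"
    using mD borel_measurable_restrict_space_iff[of \<Omega> lebesgue D] \<Omega>s by simp
  have "integral\<^sup>L lborel (\<lambda>x. h x * indicator (box a b) x) = 0" if ab: "cbox a b \<subseteq> \<Omega>" for a b
  proof -
    have mi: "indicator (box a b) \<in> borel_measurable lebesgue"
      by (intro measurable_completion borel_measurable_indicator) (simp add: borel_open)
    have mhb: "(\<lambda>x. h x * indicator (box a b) x) \<in> borel_measurable lborel"
      using hm by (simp add: borel_open)
    then have "integral\<^sup>L lborel (\<lambda>x. h x * indicator (box a b) x)
        = integral\<^sup>L lebesgue (\<lambda>x. h x * indicator (box a b) x)"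
      by (simp add: integral_completion)
    also have "\<dots> = integral\<^sup>L lebesgue (\<lambda>x. indicator \<Omega> x *\<^sub>R (D x * indicator (box a b) x))"
    proof (rule integral_cong_AE)
      show "(\<lambda>x. h x * indicator (box a b) x) \<in> borel_measurable lebesgue"
        using mhb by (intro measurable_completion) simp
      show "(\<lambda>x. indicator \<Omega> x *\<^sub>R (D x * indicator (box a b) x)) \<in> borel_measurable lebesgue"
        using borel_measurable_times[OF mE mi] by (simp add: mult.assoc)
      show "AE x in lebesgue. h x * indicator (box a b) x = indicator \<Omega> x *\<^sub>R (D x * indicator (box a b) x)"
        using hE by eventually_elim (simp add: mult_ac)
    qed
    also have "\<dots> = integral\<^sup>L (lebesgue_on \<Omega>) (\<lambda>x. D x * indicator (box a b) x)"
      using integral_restrict_space[of \<Omega> lebesgue "\<lambda>x. D x * indicator (box a b) x"] \<Omega>s by simp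
    also have "\<dots> = 0" by (rule integral_box_eq_0[OF \<Omega> DL orth ab])
    finally show ?thesis .
  qed
  then have "AE x in lborel. h x = 0" using AE_zero_if_box_integrals_0[OF \<Omega>(1) hm ih h0] by blast
  then have "AE x in lebesgue. h x = 0" by (rule AE_completion)
  with hE have "AE x in lebesgue. x \<in> \<Omega> \<longrightarrow> D x = 0" by eventually_elim auto
  then show ?thesis using \<Omega>s by (simp add: AE_restrict_space_iff)
qed

lemma is_wgrad_unique:
  fixes f :: "real^'d \<Rightarrow> real"
  assumes \<Omega>: "open \<Omega>" "bounded \<Omega>" and G: "is_wgrad \<Omega> f G" and K: "is_wgrad \<Omega> f K"
  shows "AE x in lebesgue_on \<Omega>. G i x = K i x"
proof -
  have GL: "L2 \<Omega> (G i)" and KL: "L2 \<Omega> (K i)" using G K by (auto simp: is_wgrad_def)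
  have "AE x in lebesgue_on \<Omega>. G i x - K i x = 0"
  proof (rule AE_zero_if_orthogonal_test_funs[OF \<Omega> L2_diff[OF GL KL]])
    fix \<psi> assume t: "test_fun \<Omega> \<psi>"
    have \<psi>L: "L2 \<Omega> \<psi>" by (rule test_fun_L2[OF \<Omega>(1) t])
    have "ip \<Omega> (\<lambda>x. G i x - K i x) \<psi> = ip \<Omega> (G i) \<psi> - ip \<Omega> (K i) \<psi>"
      by (rule ip_diff1[OF GL KL \<psi>L])
    also have "\<dots> = 0" using G K t by (simp add: is_wgrad_def)
    finally show "ip \<Omega> (\<lambda>x. G i x - K i x) \<psi> = 0" .
  qed
  then show ?thesis by simp
qed

section \<open>\<open>L\<^sup>4\<close> estimates\<close>

definition L4 :: "(real^'d) set \<Rightarrow> (real^'d \<Rightarrow> real) \<Rightarrow> bool" where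
  "L4 \<Omega> f \<longleftrightarrow> f \<in> borel_measurable (lebesgue_on \<Omega>) \<and> integrable (lebesgue_on \<Omega>) (\<lambda>x. (f x) ^ 4)"

definition I4 :: "(real^'d) set \<Rightarrow> (real^'d \<Rightarrow> real) \<Rightarrow> real" where
  "I4 \<Omega> f = integral\<^sup>L (lebesgue_on \<Omega>) (\<lambda>x. (f x) ^ 4)"

lemma I4_nonneg: "I4 \<Omega> f \<ge> 0"
  unfolding I4_def
  apply (rule integral_nonneg_AE)
  apply (rule AE_I2)
  by simp

lemma power4_add_le: fixes a b :: real shows "(a + b) ^ 4 \<le> 8 * (a ^ 4 + b ^ 4)"
proof -
  have h1: "(a + b)\<^sup>2 \<le> 2 * (a\<^sup>2 + b\<^sup>2)"
  proof -
    have "0 \<le> (a - b)\<^sup>2" by simp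
    then show ?thesis by (simp add: power2_eq_square algebra_simps)
  qed
  have h2: "(a\<^sup>2 + b\<^sup>2)\<^sup>2 \<le> 2 * ((a\<^sup>2)\<^sup>2 + (b\<^sup>2)\<^sup>2)"
  proof -
    have "0 \<le> (a\<^sup>2 - b\<^sup>2)\<^sup>2" by simp
    then show ?thesis by (simp add: power2_eq_square algebra_simps)
  qed
  have "(a + b) ^ 4 = ((a + b)\<^sup>2)\<^sup>2" by simp
  also have "\<dots> \<le> (2 * (a\<^sup>2 + b\<^sup>2))\<^sup>2"
    using h1 by (intro power_mono) auto
  also have "\<dots> = 4 * (a\<^sup>2 + b\<^sup>2)\<^sup>2" by (simp add: power2_eq_square algebra_simps)
  also have "\<dots> \<le> 4 * (2 * ((a\<^sup>2)\<^sup>2 + (b\<^sup>2)\<^sup>2))" using h2 by simp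
  also have "\<dots> = 8 * (a ^ 4 + b ^ 4)" by simp
  finally show ?thesis .
qed

lemma L4_add: "L4 \<Omega> f \<Longrightarrow> L4 \<Omega> g \<Longrightarrow> L4 \<Omega> (\<lambda>x. f x + g x)"
  unfolding L4_def
proof (intro conjI)
  assume a: "f \<in> borel_measurable (lebesgue_on \<Omega>) \<and> integrable (lebesgue_on \<Omega>) (\<lambda>x. f x ^ 4)"
     "g \<in> borel_measurable (lebesgue_on \<Omega>) \<and> integrable (lebesgue_on \<Omega>) (\<lambda>x. g x ^ 4)"
  then show m: "(\<lambda>x. f x + g x) \<in> borel_measurable (lebesgue_on \<Omega>)" by (intro borel_measurable_add) auto
  show "integrable (lebesgue_on \<Omega>) (\<lambda>x. (f x + g x) ^ 4)"
  proof (rule Bochner_Integration.integrable_bound)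
    show "integrable (lebesgue_on \<Omega>) (\<lambda>x. 8 * (f x ^ 4 + g x ^ 4))" using a by simp
    show "(\<lambda>x. (f x + g x) ^ 4) \<in> borel_measurable (lebesgue_on \<Omega>)" using m by (rule borel_measurable_power)
    show "AE x in lebesgue_on \<Omega>. norm ((f x + g x) ^ 4) \<le> norm (8 * (f x ^ 4 + g x ^ 4))"
      using power4_add_le by (intro AE_I2) (simp add: add_nonneg_nonneg)
  qed
qed

lemma L4_neg: "L4 \<Omega> f \<Longrightarrow> L4 \<Omega> (\<lambda>x. - f x)"
  unfolding L4_def by simp

lemma L4_diff: "L4 \<Omega> f \<Longrightarrow> L4 \<Omega> g \<Longrightarrow> L4 \<Omega> (\<lambda>x. f x - g x)"
  using L4_add[of \<Omega> f "\<lambda>x. - g x"] L4_neg[of \<Omega> g] by simp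

lemma L4_square_L2: "L4 \<Omega> f \<Longrightarrow> L2 \<Omega> (\<lambda>x. (f x)\<^sup>2)"
  unfolding L4_def L2_def by (auto simp: power_mult[symmetric] intro: borel_measurable_power)

lemma nrm_square_fun: "nrm \<Omega> (\<lambda>x. (f x)\<^sup>2) = sqrt (I4 \<Omega> f)"
  unfolding nrm_def ip_def I4_def by (simp add: power2_eq_square[symmetric] power_mult[symmetric])

lemma L4_mult_L2: "L4 \<Omega> f \<Longrightarrow> L4 \<Omega> g \<Longrightarrow> L2 \<Omega> (\<lambda>x. f x * g x)"
proof -
  assume f: "L4 \<Omega> f" and g: "L4 \<Omega> g"
  have "integrable (lebesgue_on \<Omega>) (\<lambda>x. (f x)\<^sup>2 * (g x)\<^sup>2)"
    by (rule L2_integrable_mult[OF L4_square_L2[OF f] L4_square_L2[OF g]])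
  then show ?thesis using f g unfolding L2_def L4_def by (auto simp: power_mult_distrib intro: borel_measurable_times)
qed

lemma nrm_mult_le_I4:
  assumes f: "L4 \<Omega> f" and g: "L4 \<Omega> g"
  shows "(nrm \<Omega> (\<lambda>x. f x * g x))\<^sup>2 \<le> sqrt (I4 \<Omega> f) * sqrt (I4 \<Omega> g)"
proof -
  have "(nrm \<Omega> (\<lambda>x. f x * g x))\<^sup>2 = ip \<Omega> (\<lambda>x. (f x)\<^sup>2) (\<lambda>x. (g x)\<^sup>2)"
    unfolding nrm_sq ip_def by (simp add: power_mult_distrib power2_eq_square mult_ac)
  also have "\<dots> \<le> \<bar>ip \<Omega> (\<lambda>x. (f x)\<^sup>2) (\<lambda>x. (g x)\<^sup>2)\<bar>" by simp
  also have "\<dots> \<le> nrm \<Omega> (\<lambda>x. (f x)\<^sup>2) * nrm \<Omega> (\<lambda>x. (g x)\<^sup>2)"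
    by (rule ip_Cauchy_Schwarz[OF L4_square_L2[OF f] L4_square_L2[OF g]])
  finally show ?thesis by (simp add: nrm_square_fun)
qed

lemma integral_trilinear_le:
  assumes f: "L4 \<Omega> f" and g: "L4 \<Omega> g" and k: "L2 \<Omega> k"
  shows "\<bar>integral\<^sup>L (lebesgue_on \<Omega>) (\<lambda>x. f x * g x * k x)\<bar> \<le> sqrt (sqrt (I4 \<Omega> f) * sqrt (I4 \<Omega> g)) * nrm \<Omega> k"
proof -
  have "integral\<^sup>L (lebesgue_on \<Omega>) (\<lambda>x. f x * g x * k x) = ip \<Omega> (\<lambda>x. f x * g x) k"
    by (simp add: ip_def)
  also have "\<bar>\<dots>\<bar> \<le> nrm \<Omega> (\<lambda>x. f x * g x) * nrm \<Omega> k"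
    by (rule ip_Cauchy_Schwarz[OF L4_mult_L2[OF f g] k])
  also have "\<dots> \<le> sqrt (sqrt (I4 \<Omega> f) * sqrt (I4 \<Omega> g)) * nrm \<Omega> k"
  proof (rule mult_right_mono)
    have "nrm \<Omega> (\<lambda>x. f x * g x) = sqrt ((nrm \<Omega> (\<lambda>x. f x * g x))\<^sup>2)"
      using nrm_nonneg[of \<Omega> "\<lambda>x. f x * g x"] by simp
    also have "\<dots> \<le> sqrt (sqrt (I4 \<Omega> f) * sqrt (I4 \<Omega> g))"
      by (rule real_sqrt_le_mono[OF nrm_mult_le_I4[OF f g]])
    finally show "nrm \<Omega> (\<lambda>x. f x * g x) \<le> sqrt (sqrt (I4 \<Omega> f) * sqrt (I4 \<Omega> g))" .
  qed (rule nrm_nonneg)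
  finally show ?thesis .
qed
lemma integrable_trilinear:
  assumes f: "L4 \<Omega> f" and g: "L4 \<Omega> g" and k: "L2 \<Omega> k"
  shows "integrable (lebesgue_on \<Omega>) (\<lambda>x. f x * g x * k x)"
  using L2_integrable_mult[OF L4_mult_L2[OF f g] k] .

lemma integral_trilinear_tendsto_0:
  assumes f: "\<And>n. L4 \<Omega> (f n)" and g: "\<And>n. L4 \<Omega> (g n)" and k: "\<And>n. L2 \<Omega> (k n)"
    and f0: "(\<lambda>n. I4 \<Omega> (f n)) \<longlonglongrightarrow> 0"
    and gb: "eventually (\<lambda>n. I4 \<Omega> (g n) \<le> B) sequentially"
    and kb: "eventually (\<lambda>n. nrm \<Omega> (k n) \<le> C) sequentially"
  shows "(\<lambda>n. integral\<^sup>L (lebesgue_on \<Omega>) (\<lambda>x. f n x * g n x * k n x)) \<longlonglongrightarrow> 0"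
proof (rule Lim_null_comparison)
  show "eventually (\<lambda>n. norm (integral\<^sup>L (lebesgue_on \<Omega>) (\<lambda>x. f n x * g n x * k n x)) \<le> sqrt (sqrt (I4 \<Omega> (f n)) * sqrt B) * C) sequentially"
    using gb kb
  proof eventually_elim
    case (elim n)
    have "norm (integral\<^sup>L (lebesgue_on \<Omega>) (\<lambda>x. f n x * g n x * k n x)) \<le> sqrt (sqrt (I4 \<Omega> (f n)) * sqrt (I4 \<Omega> (g n))) * nrm \<Omega> (k n)"
      using integral_trilinear_le[OF f g k] by simp
    also have "\<dots> \<le> sqrt (sqrt (I4 \<Omega> (f n)) * sqrt B) * C"
      using elim I4_nonneg[of \<Omega> "f n"] I4_nonneg[of \<Omega> "g n"] nrm_nonneg[of \<Omega> "k n"]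
      by (intro mult_mono real_sqrt_le_mono mult_left_mono) auto
    finally show ?case .
  qed
  have "(\<lambda>n. sqrt (sqrt (I4 \<Omega> (f n)) * sqrt B) * C) \<longlonglongrightarrow> sqrt (sqrt 0 * sqrt B) * C"
    by (intro tendsto_intros f0)
  then show "(\<lambda>n. sqrt (sqrt (I4 \<Omega> (f n)) * sqrt B) * C) \<longlonglongrightarrow> 0" by simp
qed

lemma integral_trilinear_tendsto_0_right:
  assumes f: "L4 \<Omega> f" and g: "L4 \<Omega> g" and k: "\<And>n. L2 \<Omega> (k n)"
    and k0: "(\<lambda>n. nrm \<Omega> (k n)) \<longlonglongrightarrow> 0"
  shows "(\<lambda>n. integral\<^sup>L (lebesgue_on \<Omega>) (\<lambda>x. f x * g x * k n x)) \<longlonglongrightarrow> 0"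
proof (rule Lim_null_comparison)
  show "\<forall>\<^sub>F n in sequentially. norm (integral\<^sup>L (lebesgue_on \<Omega>) (\<lambda>x. f x * g x * k n x)) \<le> sqrt (sqrt (I4 \<Omega> f) * sqrt (I4 \<Omega> g)) * nrm \<Omega> (k n)"
    using integral_trilinear_le[OF f g k] by (intro always_eventually allI) simp
  have "(\<lambda>n. sqrt (sqrt (I4 \<Omega> f) * sqrt (I4 \<Omega> g)) * nrm \<Omega> (k n)) \<longlonglongrightarrow> sqrt (sqrt (I4 \<Omega> f) * sqrt (I4 \<Omega> g)) * 0"
    by (intro tendsto_intros k0)
  then show "(\<lambda>n. sqrt (sqrt (I4 \<Omega> f) * sqrt (I4 \<Omega> g)) * nrm \<Omega> (k n)) \<longlonglongrightarrow> 0" by simp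
qed

lemma I4_L4norm: "(L4norm \<Omega> f) ^ 4 = I4 \<Omega> f"
proof -
  have a: "I4 \<Omega> f \<ge> 0" by (rule I4_nonneg)
  show ?thesis
  proof (cases "I4 \<Omega> f = 0")
    case True then show ?thesis by (simp add: L4norm_def I4_def[symmetric])
  next
    case False
    with a have p: "I4 \<Omega> f > 0" by simp
    have "(I4 \<Omega> f powr (1/4)) ^ 4 = (I4 \<Omega> f powr (1/4)) powr (real 4)"
      using p by (intro powr_realpow[symmetric]) simp
    also have "\<dots> = I4 \<Omega> f" using p by (simp add: powr_powr)
    finally show ?thesis by (simp add: L4norm_def I4_def[symmetric])
  qed
qed

lemma L4norm_nonneg: "L4norm \<Omega> f \<ge> 0"
  by (simp add: L4norm_def)

lemma I4_add_le:
  assumes f: "L4 \<Omega> f" and g: "L4 \<Omega> g"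
  shows "I4 \<Omega> (\<lambda>x. f x + g x) \<le> 8 * (I4 \<Omega> f + I4 \<Omega> g)"
proof -
  have "I4 \<Omega> (\<lambda>x. f x + g x) \<le> integral\<^sup>L (lebesgue_on \<Omega>) (\<lambda>x. 8 * ((f x) ^ 4 + (g x) ^ 4))"
    unfolding I4_def using L4_add[OF f g] f g power4_add_le
    by (intro integral_mono) (auto simp: L4_def)
  also have "\<dots> = 8 * (I4 \<Omega> f + I4 \<Omega> g)"
    using f g by (simp add: I4_def L4_def)
  finally show ?thesis .
qed

lemma integral_trilinear_tendsto:
  assumes F: "\<And>n. L4 \<Omega> (F n)" "L4 \<Omega> f" "(\<lambda>n. I4 \<Omega> (\<lambda>x. F n x - f x)) \<longlonglongrightarrow> 0"
    and G: "\<And>n. L4 \<Omega> (G n)" "L4 \<Omega> g" "(\<lambda>n. I4 \<Omega> (\<lambda>x. G n x - g x)) \<longlonglongrightarrow> 0"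
    and K: "\<And>n. L2 \<Omega> (K n)" "L2 \<Omega> k" "(\<lambda>n. nrm \<Omega> (\<lambda>x. K n x - k x)) \<longlonglongrightarrow> 0"
  shows "(\<lambda>n. integral\<^sup>L (lebesgue_on \<Omega>) (\<lambda>x. F n x * G n x * K n x))
    \<longlonglongrightarrow> integral\<^sup>L (lebesgue_on \<Omega>) (\<lambda>x. f x * g x * k x)"
proof -
  let ?int = "integral\<^sup>L (lebesgue_on \<Omega>)"
  have dF: "L4 \<Omega> (\<lambda>x. F n x - f x)" and dG: "L4 \<Omega> (\<lambda>x. G n x - g x)"
    and dK: "L2 \<Omega> (\<lambda>x. K n x - k x)" for n
    using F G K by (auto intro: L4_diff L2_diff)
  have split: "?int (\<lambda>x. F n x * G n x * K n x) =
      ?int (\<lambda>x. (F n x - f x) * G n x * K n x) + ?int (\<lambda>x. (G n x - g x) * f x * K n x)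
      + ?int (\<lambda>x. f x * g x * (K n x - k x)) + ?int (\<lambda>x. f x * g x * k x)" for n
  proof -
    have "(\<lambda>x. F n x * G n x * K n x) = (\<lambda>x. (F n x - f x) * G n x * K n x
        + (G n x - g x) * f x * K n x + f x * g x * (K n x - k x) + f x * g x * k x)"
      by (auto simp: algebra_simps)
    then show ?thesis
      using integrable_trilinear[OF dF G(1) K(1)] integrable_trilinear[OF dG F(2) K(1)]
        integrable_trilinear[OF F(2) G(2) dK] integrable_trilinear[OF F(2) G(2) K(2)]
      by simp
  qed
  have G_bound: "eventually (\<lambda>n. I4 \<Omega> (G n) \<le> 8 * (1 + I4 \<Omega> g)) sequentially"
    using order_tendstoD(2)[OF G(3) zero_less_one]
  proof eventually_elim
    case (elim n)
    have "I4 \<Omega> (G n) = I4 \<Omega> (\<lambda>x. (G n x - g x) + g x)" by simp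
    also have "\<dots> \<le> 8 * (I4 \<Omega> (\<lambda>x. G n x - g x) + I4 \<Omega> g)" by (rule I4_add_le[OF dG G(2)])
    finally show ?case using elim by simp
  qed
  have K_bound: "eventually (\<lambda>n. nrm \<Omega> (K n) \<le> 1 + nrm \<Omega> k) sequentially"
    using order_tendstoD(2)[OF K(3) zero_less_one]
  proof eventually_elim
    case (elim n)
    have "nrm \<Omega> (K n) = nrm \<Omega> (\<lambda>x. (K n x - k x) + k x)" by simp
    also have "\<dots> \<le> nrm \<Omega> (\<lambda>x. K n x - k x) + nrm \<Omega> k" by (rule nrm_triangle[OF dK K(2)])
    finally show ?case using elim by simp
  qed
  have "(\<lambda>n. ?int (\<lambda>x. (F n x - f x) * G n x * K n x)) \<longlonglongrightarrow> 0"
    by (rule integral_trilinear_tendsto_0[OF dF G(1) K(1) F(3) G_bound K_bound])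
  moreover have "(\<lambda>n. ?int (\<lambda>x. (G n x - g x) * f x * K n x)) \<longlonglongrightarrow> 0"
    by (rule integral_trilinear_tendsto_0[OF dG F(2) K(1) G(3) _ K_bound, where B="I4 \<Omega> f"]) simp
  moreover have "(\<lambda>n. ?int (\<lambda>x. f x * g x * (K n x - k x))) \<longlonglongrightarrow> 0"
    by (rule integral_trilinear_tendsto_0_right[OF F(2) G(2) dK K(3)])
  ultimately have "(\<lambda>n. ?int (\<lambda>x. (F n x - f x) * G n x * K n x) + ?int (\<lambda>x. (G n x - g x) * f x * K n x)
      + ?int (\<lambda>x. f x * g x * (K n x - k x)) + ?int (\<lambda>x. f x * g x * k x))
      \<longlonglongrightarrow> 0 + 0 + 0 + ?int (\<lambda>x. f x * g x * k x)"
    by (intro tendsto_add tendsto_const)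
  then show ?thesis unfolding split by simp
qed

section \<open>Weak gradients and \<open>H\<^sup>1\<^sub>0(\<Omega>)\<close>\<close>

lemma is_wgrad_wgrad: "H1 \<Omega> f \<Longrightarrow> is_wgrad \<Omega> f (wgrad \<Omega> f)"
proof -
  assume "H1 \<Omega> f"
  then have "\<exists>G. is_wgrad \<Omega> f G" by (simp add: H1_def)
  then show ?thesis unfolding wgrad_def by (rule someI_ex)
qed

lemma is_wgrad_L2_grad: "is_wgrad \<Omega> f G \<Longrightarrow> L2 \<Omega> (G i)"
  by (simp add: is_wgrad_def)

lemma is_wgrad_L2: "is_wgrad \<Omega> f G \<Longrightarrow> L2 \<Omega> f"
  by (simp add: is_wgrad_def)

lemma is_wgrad_lin:
  assumes \<Omega>: "open \<Omega>" and f: "is_wgrad \<Omega> f G" and g: "is_wgrad \<Omega> g K"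
  shows "is_wgrad \<Omega> (\<lambda>x. a * f x + b * g x) (\<lambda>i x. a * G i x + b * K i x)"
  unfolding is_wgrad_def
proof (intro conjI allI impI)
  show "L2 \<Omega> (\<lambda>x. a * f x + b * g x)" using f g by (intro L2_lin) (auto simp: is_wgrad_def)
  fix i
  show "L2 \<Omega> (\<lambda>x. a * G i x + b * K i x)" using f g by (intro L2_lin) (auto simp: is_wgrad_def)
  fix \<phi> assume t: "test_fun \<Omega> \<phi>"
  have pL: "L2 \<Omega> (pd i \<phi>)" by (rule test_fun_L2[OF \<Omega> test_fun_pd[OF t]])
  have L: "L2 \<Omega> \<phi>" by (rule test_fun_L2[OF \<Omega> t])
  have "ip \<Omega> (\<lambda>x. a * f x + b * g x) (pd i \<phi>) = a * ip \<Omega> f (pd i \<phi>) + b * ip \<Omega> g (pd i \<phi>)"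
    using f g pL by (intro ip_lin1) (auto simp: is_wgrad_def)
  also have "\<dots> = - (a * ip \<Omega> (G i) \<phi> + b * ip \<Omega> (K i) \<phi>)"
    using f g t by (simp add: is_wgrad_def)
  also have "a * ip \<Omega> (G i) \<phi> + b * ip \<Omega> (K i) \<phi> = ip \<Omega> (\<lambda>x. a * G i x + b * K i x) \<phi>"
    using f g L by (intro ip_lin1[symmetric]) (auto simp: is_wgrad_def)
  finally show "ip \<Omega> (\<lambda>x. a * f x + b * g x) (pd i \<phi>) = - ip \<Omega> (\<lambda>x. a * G i x + b * K i x) \<phi>" .
qed

lemma is_wgrad_zero: "is_wgrad \<Omega> (\<lambda>x. 0) (\<lambda>i x. 0)"
  unfolding is_wgrad_def by (simp add: L2_zero ip_def)

lemma is_wgrad_sum: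
  assumes \<Omega>: "open \<Omega>"
  shows "finite B \<Longrightarrow> (\<And>b. b \<in> B \<Longrightarrow> is_wgrad \<Omega> (F b) (G b)) \<Longrightarrow>
    is_wgrad \<Omega> (\<lambda>x. \<Sum>b\<in>B. c b * F b x) (\<lambda>i x. \<Sum>b\<in>B. c b * G b i x)"
proof (induction B rule: finite_induct)
  case empty then show ?case by (simp add: is_wgrad_zero)
next
  case (insert b B)
  have "is_wgrad \<Omega> (\<lambda>x. c b * F b x + 1 * (\<Sum>b\<in>B. c b * F b x)) (\<lambda>i x. c b * G b i x + 1 * (\<Sum>b\<in>B. c b * G b i x))"
    using insert by (intro is_wgrad_lin[OF \<Omega>]) auto
  then show ?case using insert by simp
qed

lemma H10_H1: "H10 \<Omega> f \<Longrightarrow> H1 \<Omega> f"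
  by (simp add: H10_def)

definition H1_embeds_L4 :: "(real^'d) set \<Rightarrow> real \<Rightarrow> bool" where
  "H1_embeds_L4 \<Omega> s0 \<longleftrightarrow> (\<forall>z. H1 \<Omega> z \<longrightarrow>
     integrable (lebesgue_on \<Omega>) (\<lambda>x. (z x) ^ 4) \<and> L4norm \<Omega> z \<le> s0 * H1norm \<Omega> z)"

lemma H1_L4:
  assumes s0: "H1_embeds_L4 \<Omega> s0" and "H1 \<Omega> f"
  shows "L4 \<Omega> f"
proof -
  have "L2 \<Omega> f" using is_wgrad_L2[OF is_wgrad_wgrad[OF assms(2)]] .
  then show ?thesis using s0 assms(2) by (simp add: L4_def L2_def H1_embeds_L4_def)
qed

lemma H10_lincomb:
  fixes Bs :: "(real^'d \<Rightarrow> real) set"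
  assumes \<Omega>: "open \<Omega>" "bounded \<Omega>" and B: "finite Bs" "\<forall>b\<in>Bs. H10 \<Omega> b"
  shows "H10 \<Omega> (\<lambda>x. \<Sum>b\<in>Bs. c b * b x)"
proof -
  define w where "w = (\<lambda>x. \<Sum>b\<in>Bs. c b * b x)"
  have "\<forall>b\<in>Bs. \<exists>\<phi>s. (\<forall>n. test_fun \<Omega> (\<phi>s n)) \<and>
      (\<lambda>n. nrm \<Omega> (\<lambda>x. \<phi>s n x - b x)) \<longlonglongrightarrow> 0 \<and>
      (\<forall>i. (\<lambda>n. nrm \<Omega> (\<lambda>x. pd i (\<phi>s n) x - wgrad \<Omega> b i x)) \<longlonglongrightarrow> 0)"
    using B(2) by (simp add: H10_def)
  then obtain \<phi>s where \<phi>s: "\<forall>b\<in>Bs. (\<forall>n. test_fun \<Omega> (\<phi>s b n)) \<and>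
      (\<lambda>n. nrm \<Omega> (\<lambda>x. \<phi>s b n x - b x)) \<longlonglongrightarrow> 0 \<and>
      (\<forall>i. (\<lambda>n. nrm \<Omega> (\<lambda>x. pd i (\<phi>s b n) x - wgrad \<Omega> b i x)) \<longlonglongrightarrow> 0)"
    by (auto dest!: bchoice)
  have tf: "\<And>b n. b \<in> Bs \<Longrightarrow> test_fun \<Omega> (\<phi>s b n)" using \<phi>s by blast
  have Wb: "\<And>b. b \<in> Bs \<Longrightarrow> is_wgrad \<Omega> b (wgrad \<Omega> b)"
    using B(2) by (intro is_wgrad_wgrad H10_H1) simp
  have bL: "\<And>b. b \<in> Bs \<Longrightarrow> L2 \<Omega> b" and WL: "\<And>b i. b \<in> Bs \<Longrightarrow> L2 \<Omega> (wgrad \<Omega> b i)"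
    using Wb is_wgrad_L2 is_wgrad_L2_grad by blast+
  have \<phi>L: "\<And>b n. b \<in> Bs \<Longrightarrow> L2 \<Omega> (\<phi>s b n)" and pd\<phi>L: "\<And>b n i. b \<in> Bs \<Longrightarrow> L2 \<Omega> (pd i (\<phi>s b n))"
    using tf by (auto intro: test_fun_L2[OF \<Omega>(1)] test_fun_pd)
  define H where "H = (\<lambda>i x. \<Sum>b\<in>Bs. c b * wgrad \<Omega> b i x)"
  have wH: "is_wgrad \<Omega> w H"
    unfolding w_def H_def by (rule is_wgrad_sum[OF \<Omega>(1) B(1)]) (use Wb in auto)
  have H1w: "H1 \<Omega> w" using wH by (auto simp: H1_def)
  define \<psi> where "\<psi> n = (\<lambda>x. \<Sum>b\<in>Bs. c b * \<phi>s b n x)" for n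
  have t\<psi>: "test_fun \<Omega> (\<psi> n)" for n
    unfolding \<psi>_def using tf by (intro test_fun_sum[OF B(1)] test_fun_scale) auto
  have pd\<psi>: "pd i (\<psi> n) = (\<lambda>x. \<Sum>b\<in>Bs. c b * pd i (\<phi>s b n) x)" for i n
    unfolding \<psi>_def using B(1) test_fun_differentiable[OF tf] by (rule pd_lincomb)
  have "(\<lambda>n. nrm \<Omega> (\<lambda>x. \<psi> n x - w x)) \<longlonglongrightarrow> 0"
  proof -
    have "(\<lambda>n. nrm \<Omega> (\<lambda>x. \<Sum>b\<in>Bs. c b * (\<phi>s b n x - b x))) \<longlonglongrightarrow> 0"
      using \<phi>s bL \<phi>L by (intro nrm_sum_tendsto_0[OF B(1)] L2_diff) auto
    then show ?thesis by (simp add: \<psi>_def w_def sum_subtractf[symmetric] right_diff_distrib)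
  qed
  moreover have "(\<lambda>n. nrm \<Omega> (\<lambda>x. pd i (\<psi> n) x - wgrad \<Omega> w i x)) \<longlonglongrightarrow> 0" for i
  proof -
    have "nrm \<Omega> (\<lambda>x. pd i (\<psi> n) x - wgrad \<Omega> w i x) = nrm \<Omega> (\<lambda>x. pd i (\<psi> n) x - H i x)" for n
    proof (rule nrm_cong_AE)
      show "AE x in lebesgue_on \<Omega>. pd i (\<psi> n) x - wgrad \<Omega> w i x = pd i (\<psi> n) x - H i x"
        using is_wgrad_unique[OF \<Omega> is_wgrad_wgrad[OF H1w] wH] by eventually_elim simp
      show "(\<lambda>x. pd i (\<psi> n) x - wgrad \<Omega> w i x) \<in> borel_measurable (lebesgue_on \<Omega>)"
        "(\<lambda>x. pd i (\<psi> n) x - H i x) \<in> borel_measurable (lebesgue_on \<Omega>)"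
        using L2_diff[OF test_fun_L2[OF \<Omega>(1) test_fun_pd[OF t\<psi>]] is_wgrad_L2_grad[OF is_wgrad_wgrad[OF H1w]]]
          L2_diff[OF test_fun_L2[OF \<Omega>(1) test_fun_pd[OF t\<psi>]] is_wgrad_L2_grad[OF wH]]
        by (auto simp: L2_def)
    qed
    moreover have "(\<lambda>n. nrm \<Omega> (\<lambda>x. \<Sum>b\<in>Bs. c b * (pd i (\<phi>s b n) x - wgrad \<Omega> b i x))) \<longlonglongrightarrow> 0"
      using \<phi>s WL pd\<phi>L by (intro nrm_sum_tendsto_0[OF B(1)] L2_diff) auto
    ultimately show ?thesis
      by (simp add: pd\<psi> H_def sum_subtractf[symmetric] right_diff_distrib)
  qed
  ultimately show ?thesis using H1w t\<psi> unfolding H10_def w_def by blast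
qed

lemma H10_test_fun_approx_L4:
  fixes w :: "real^'d \<Rightarrow> real"
  assumes \<Omega>: "open \<Omega>" "bounded \<Omega>" and s0: "H1_embeds_L4 \<Omega> s0" and w: "H10 \<Omega> w"
  obtains \<psi> where "\<And>n. test_fun \<Omega> (\<psi> n)" "(\<lambda>n. I4 \<Omega> (\<lambda>x. \<psi> n x - w x)) \<longlonglongrightarrow> 0"
    "\<And>i. (\<lambda>n. nrm \<Omega> (\<lambda>x. pd i (\<psi> n) x - wgrad \<Omega> w i x)) \<longlonglongrightarrow> 0"
proof -
  obtain \<psi> where t\<psi>: "\<And>n. test_fun \<Omega> (\<psi> n)" and lim: "(\<lambda>n. nrm \<Omega> (\<lambda>x. \<psi> n x - w x)) \<longlonglongrightarrow> 0"
    and pd_lim: "\<And>i. (\<lambda>n. nrm \<Omega> (\<lambda>x. pd i (\<psi> n) x - wgrad \<Omega> w i x)) \<longlonglongrightarrow> 0"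
    using w unfolding H10_def by blast
  have wG: "is_wgrad \<Omega> w (wgrad \<Omega> w)" by (rule is_wgrad_wgrad[OF H10_H1[OF w]])
  define e where "e n = (\<lambda>x. \<psi> n x - w x)" for n
  define E where "E n = (\<lambda>i x. pd i (\<psi> n) x - wgrad \<Omega> w i x)" for n
  have eW: "is_wgrad \<Omega> (e n) (E n)" for n
    using is_wgrad_lin[OF \<Omega>(1) test_fun_is_wgrad[OF \<Omega>(1) t\<psi>] wG, where a=1 and b="-1"]
    by (simp add: e_def E_def)
  have H1e: "H1 \<Omega> (e n)" for n using eW by (auto simp: H1_def)
  have nrm_wgrad: "nrm \<Omega> (wgrad \<Omega> (e n) i) = nrm \<Omega> (E n i)" for n i
    using is_wgrad_unique[OF \<Omega> is_wgrad_wgrad[OF H1e] eW]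
      is_wgrad_L2_grad[OF is_wgrad_wgrad[OF H1e]] is_wgrad_L2_grad[OF eW]
    by (intro nrm_cong_AE) (auto simp: L2_def)
  have "(\<lambda>n. sqrt ((nrm \<Omega> (e n))\<^sup>2 + (\<Sum>i\<in>UNIV. (nrm \<Omega> (E n i))\<^sup>2)))
      \<longlonglongrightarrow> sqrt (0\<^sup>2 + (\<Sum>i\<in>(UNIV::'d set). 0\<^sup>2))"
    using lim pd_lim unfolding e_def E_def by (intro tendsto_intros)
  then have "(\<lambda>n. H1norm \<Omega> (e n)) \<longlonglongrightarrow> 0" by (simp add: H1norm_def nrm_wgrad)
  then have H1e0: "(\<lambda>n. s0 * H1norm \<Omega> (e n)) \<longlonglongrightarrow> 0"
    using tendsto_mult_left[of _ 0 _ s0] by simp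
  have "(\<lambda>n. L4norm \<Omega> (e n)) \<longlonglongrightarrow> 0"
  proof (rule tendsto_sandwich[OF _ _ tendsto_const H1e0])
    show "\<forall>\<^sub>F n in sequentially. 0 \<le> L4norm \<Omega> (e n)" by (simp add: L4norm_nonneg)
    show "\<forall>\<^sub>F n in sequentially. L4norm \<Omega> (e n) \<le> s0 * H1norm \<Omega> (e n)"
      using s0 H1e by (simp add: H1_embeds_L4_def)
  qed
  then have "(\<lambda>n. (L4norm \<Omega> (e n)) ^ 4) \<longlonglongrightarrow> 0 ^ 4" by (intro tendsto_intros)
  then have "(\<lambda>n. I4 \<Omega> (e n)) \<longlonglongrightarrow> 0" by (simp add: I4_L4norm)
  then show thesis by (intro that[OF t\<psi> _ pd_lim]) (simp add: e_def)
qed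

text \<open>Testing the weak derivative of \<open>w\<close> against \<open>\<psi>\<^sub>n\<^sup>2\<close> and letting \<open>\<psi>\<^sub>n \<rightarrow> w\<close> yields \<open>2A = -A\<close>
  for \<open>A = \<integral> w\<^sup>2 \<partial>\<^sub>iw\<close>.\<close>

lemma integral_square_mult_wgrad_eq_0:
  assumes \<Omega>: "open \<Omega>" "bounded \<Omega>" and s0: "H1_embeds_L4 \<Omega> s0" and w: "H10 \<Omega> w"
  shows "integral\<^sup>L (lebesgue_on \<Omega>) (\<lambda>x. w x * w x * wgrad \<Omega> w i x) = 0"
proof -
  let ?int = "integral\<^sup>L (lebesgue_on \<Omega>)" and ?G = "wgrad \<Omega> w i"
  obtain \<psi> where t\<psi>: "\<And>n. test_fun \<Omega> (\<psi> n)" and lim: "(\<lambda>n. I4 \<Omega> (\<lambda>x. \<psi> n x - w x)) \<longlonglongrightarrow> 0"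
    and pd_lim: "\<And>j. (\<lambda>n. nrm \<Omega> (\<lambda>x. pd j (\<psi> n) x - wgrad \<Omega> w j x)) \<longlonglongrightarrow> 0"
    using H10_test_fun_approx_L4[OF \<Omega> s0 w] by blast
  have wG: "is_wgrad \<Omega> w (wgrad \<Omega> w)" by (rule is_wgrad_wgrad[OF H10_H1[OF w]])
  have w4: "L4 \<Omega> w" by (rule H1_L4[OF s0 H10_H1[OF w]])
  have \<psi>4: "L4 \<Omega> (\<psi> n)" for n
    using test_fun_is_wgrad[OF \<Omega>(1) t\<psi>] by (intro H1_L4[OF s0]) (auto simp: H1_def)
  have GL: "L2 \<Omega> ?G" by (rule is_wgrad_L2_grad[OF wG])
  have pd\<psi>L: "L2 \<Omega> (pd i (\<psi> n))" for n by (rule test_fun_L2[OF \<Omega>(1) test_fun_pd[OF t\<psi>]])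
  have ident: "2 * ?int (\<lambda>x. w x * \<psi> n x * pd i (\<psi> n) x) = - ?int (\<lambda>x. \<psi> n x * \<psi> n x * ?G x)" for n
  proof -
    have "test_fun \<Omega> (\<lambda>x. \<psi> n x * \<psi> n x)"
      using test_fun_mult[OF t\<psi>] t\<psi> by (simp add: test_fun_iff)
    then have "ip \<Omega> w (pd i (\<lambda>x. \<psi> n x * \<psi> n x)) = - ip \<Omega> ?G (\<lambda>x. \<psi> n x * \<psi> n x)"
      using wG by (simp add: is_wgrad_def)
    moreover have "pd i (\<lambda>x. \<psi> n x * \<psi> n x) = (\<lambda>x. 2 * (pd i (\<psi> n) x * \<psi> n x))"
      using pd_mult_fun[OF test_fun_differentiable[OF t\<psi>] test_fun_differentiable[OF t\<psi>]]
      by (simp add: algebra_simps)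
    ultimately have "?int (\<lambda>x. 2 * (w x * \<psi> n x * pd i (\<psi> n) x)) = - ?int (\<lambda>x. \<psi> n x * \<psi> n x * ?G x)"
      by (simp add: ip_def mult_ac)
    then show ?thesis by simp
  qed
  have const4: "(\<lambda>n. I4 \<Omega> (\<lambda>x. w x - w x)) \<longlonglongrightarrow> 0" by (simp add: I4_def)
  have const2: "(\<lambda>n. nrm \<Omega> (\<lambda>x. ?G x - ?G x)) \<longlonglongrightarrow> 0" by (simp add: nrm_def ip_def)
  have "(\<lambda>n. ?int (\<lambda>x. w x * \<psi> n x * pd i (\<psi> n) x)) \<longlonglongrightarrow> ?int (\<lambda>x. w x * w x * ?G x)"
    by (rule integral_trilinear_tendsto[OF w4 w4 const4 \<psi>4 w4 lim pd\<psi>L GL pd_lim[of i]])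
  then have "(\<lambda>n. 2 * ?int (\<lambda>x. w x * \<psi> n x * pd i (\<psi> n) x)) \<longlonglongrightarrow> 2 * ?int (\<lambda>x. w x * w x * ?G x)"
    by (intro tendsto_mult_left)
  moreover have "(\<lambda>n. ?int (\<lambda>x. \<psi> n x * \<psi> n x * ?G x)) \<longlonglongrightarrow> ?int (\<lambda>x. w x * w x * ?G x)"
    by (rule integral_trilinear_tendsto[OF \<psi>4 w4 lim \<psi>4 w4 lim GL GL const2])
  then have "(\<lambda>n. 2 * ?int (\<lambda>x. w x * \<psi> n x * pd i (\<psi> n) x)) \<longlonglongrightarrow> - ?int (\<lambda>x. w x * w x * ?G x)"
    unfolding ident by (rule tendsto_minus)
  ultimately have "2 * ?int (\<lambda>x. w x * w x * ?G x) = - ?int (\<lambda>x. w x * w x * ?G x)"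
    by (rule LIMSEQ_unique)
  then show ?thesis by simp
qed

lemma ip_convection_self_eq_0:
  assumes \<Omega>: "open \<Omega>" "bounded \<Omega>" and s0: "H1_embeds_L4 \<Omega> s0" and w: "H10 \<Omega> w"
  shows "ip \<Omega> (\<lambda>x. w x * vgrad \<Omega> v w x) w = 0"
proof -
  have w4: "L4 \<Omega> w" by (rule H1_L4[OF s0 H10_H1[OF w]])
  have GL: "L2 \<Omega> (wgrad \<Omega> w i)" for i by (rule is_wgrad_L2_grad[OF is_wgrad_wgrad[OF H10_H1[OF w]]])
  have "ip \<Omega> (\<lambda>x. w x * vgrad \<Omega> v w x) w
      = integral\<^sup>L (lebesgue_on \<Omega>) (\<lambda>x. \<Sum>i\<in>UNIV. v $ i * (w x * w x * wgrad \<Omega> w i x))"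
    unfolding ip_def vgrad_def
    by (rule arg_cong[where f="integral\<^sup>L _"]) (auto simp: sum_distrib_left sum_distrib_right algebra_simps)
  also have "\<dots> = (\<Sum>i\<in>UNIV. v $ i * integral\<^sup>L (lebesgue_on \<Omega>) (\<lambda>x. w x * w x * wgrad \<Omega> w i x))"
    using integrable_trilinear[OF w4 w4 GL] by (simp add: integral_sum)
  finally show ?thesis by (simp add: integral_square_mult_wgrad_eq_0[OF \<Omega> s0 w])
qed

section \<open>Finite spans and projection\<close>

lemma fspan_iff: "u \<in> fspan B \<longleftrightarrow> (\<exists>c. u = (\<lambda>x. \<Sum>b\<in>B. c b * b x))"
  by (auto simp: fspan_def)

lemma fspan_L2: "finite B \<Longrightarrow> (\<And>b. b \<in> B \<Longrightarrow> L2 \<Omega> b) \<Longrightarrow> u \<in> fspan B \<Longrightarrow> L2 \<Omega> u"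
  unfolding fspan_iff by (auto intro!: L2_sum L2_scale)

lemma fspan_lin:
  assumes "u \<in> fspan B" "v \<in> fspan B"
  shows "(\<lambda>x. a * u x + b * v x) \<in> fspan B"
proof -
  obtain c d where "u = (\<lambda>x. \<Sum>b\<in>B. c b * b x)" "v = (\<lambda>x. \<Sum>b\<in>B. d b * b x)"
    using assms by (auto simp: fspan_iff)
  then have "(\<lambda>x. a * u x + b * v x) = (\<lambda>x. \<Sum>b'\<in>B. (a * c b' + b * d b') * b' x)"
    by (auto simp: sum_distrib_left sum.distrib[symmetric] algebra_simps)
  then show ?thesis by (auto simp: fspan_iff)
qed

lemma fspan_diff: "u \<in> fspan B \<Longrightarrow> v \<in> fspan B \<Longrightarrow> (\<lambda>x. u x - v x) \<in> fspan B"
  using fspan_lin[of u B v 1 "-1"] by simp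

lemma fspan_zero: "(\<lambda>x. 0) \<in> fspan B"
  unfolding fspan_iff by (intro exI[of _ "\<lambda>b. 0"]) simp

lemma fspan_mem:
  assumes "finite B" "b \<in> B"
  shows "b \<in> fspan B"
proof -
  have "(\<lambda>x. \<Sum>b'\<in>B. (if b' = b then 1 else 0) * b' x) = b"
  proof
    fix x
    have "(\<Sum>b'\<in>B. (if b' = b then 1 else 0) * b' x) = (\<Sum>b'\<in>B. if b' = b then b x else 0)"
      by (rule sum.cong) auto
    also have "\<dots> = b x" using assms by simp
    finally show "(\<Sum>b'\<in>B. (if b' = b then 1 else 0) * b' x) = b x" .
  qed
  then have eq: "b = (\<lambda>x. \<Sum>b'\<in>B. (if b' = b then 1 else 0) * b' x)" by (rule sym)
  show ?thesis unfolding fspan_iff by (rule exI[of _ "\<lambda>b'. if b' = b then 1 else 0"], rule eq)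
qed

lemma fspan_mono:
  assumes "finite B'" "B \<subseteq> B'" "u \<in> fspan B"
  shows "u \<in> fspan B'"
proof -
  obtain c where u: "u = (\<lambda>x. \<Sum>b\<in>B. c b * b x)" using assms(3) by (auto simp: fspan_iff)
  have "(\<lambda>x. \<Sum>b\<in>B'. (if b \<in> B then c b else 0) * b x) = u"
  proof
    fix x
    have "(\<Sum>b\<in>B'. (if b \<in> B then c b else 0) * b x) = (\<Sum>b\<in>B'. if b \<in> B then c b * b x else 0)"
      by (rule sum.cong) auto
    also have "\<dots> = (\<Sum>b\<in>B' \<inter> B. c b * b x)" using assms(1) by (simp add: sum.inter_restrict)
    also have "B' \<inter> B = B" using assms(2) by blast
    finally show "(\<Sum>b\<in>B'. (if b \<in> B then c b else 0) * b x) = u x" by (simp add: u)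
  qed
  then have eq: "u = (\<lambda>x. \<Sum>b\<in>B'. (if b \<in> B then c b else 0) * b x)" by (rule sym)
  show ?thesis unfolding fspan_iff by (rule exI[of _ "\<lambda>b. if b \<in> B then c b else 0"], rule eq)
qed

lemma ip_lincomb_right:
  assumes "finite B" "L2 \<Omega> g" "\<And>b. b \<in> B \<Longrightarrow> L2 \<Omega> (F b)"
  shows "ip \<Omega> g (\<lambda>x. \<Sum>b\<in>B. c b * F b x) = (\<Sum>b\<in>B. c b * ip \<Omega> g (F b))"
proof -
  have "ip \<Omega> g (\<lambda>x. \<Sum>b\<in>B. c b * F b x) = integral\<^sup>L (lebesgue_on \<Omega>) (\<lambda>x. \<Sum>b\<in>B. c b * (g x * F b x))"
    unfolding ip_def by (simp add: sum_distrib_left algebra_simps)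
  also have "\<dots> = (\<Sum>b\<in>B. c b * ip \<Omega> g (F b))"
    using assms L2_integrable_mult[OF assms(2) assms(3)] by (simp add: integral_sum ip_def)
  finally show ?thesis .
qed

lemma ip_fspan_eq_0:
  assumes "finite B" "\<And>b. b \<in> B \<Longrightarrow> L2 \<Omega> b" "L2 \<Omega> g" "\<And>b. b \<in> B \<Longrightarrow> ip \<Omega> g b = 0" "u \<in> fspan B"
  shows "ip \<Omega> g u = 0"
proof -
  obtain c where u: "u = (\<lambda>x. \<Sum>b\<in>B. c b * b x)" using assms(5) by (auto simp: fspan_iff)
  show ?thesis unfolding u using assms by (simp add: ip_lincomb_right)
qed

text \<open>One Gram-Schmidt step: \<open>w = b - u\<^sub>b\<close> is orthogonal to \<open>B\<close>, so correcting \<open>u\<^sub>0\<close> by the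
  component of \<open>f - u\<^sub>0\<close> along \<open>w\<close> keeps orthogonality to \<open>B\<close> and adds it to \<open>b\<close>.\<close>

lemma orthogonal_residual_insert:
  assumes B: "finite B" and BL: "\<And>b'. b' \<in> B \<Longrightarrow> L2 \<Omega> b'" and bL: "L2 \<Omega> b" and f: "L2 \<Omega> f"
    and u0: "u0 \<in> fspan B" "\<forall>b'\<in>B. ip \<Omega> (\<lambda>x. f x - u0 x) b' = 0"
    and ub: "ub \<in> fspan B" "\<forall>b'\<in>B. ip \<Omega> (\<lambda>x. b x - ub x) b' = 0"
  shows "\<exists>u\<in>fspan (insert b B). \<forall>b'\<in>insert b B. ip \<Omega> (\<lambda>x. f x - u x) b' = 0"
proof -
  have spanL: "\<And>u. u \<in> fspan B \<Longrightarrow> L2 \<Omega> u" by (rule fspan_L2[OF B BL])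
  have mono: "\<And>u. u \<in> fspan B \<Longrightarrow> u \<in> fspan (insert b B)"
    using fspan_mono[of "insert b B" B] B by blast
  define w where "w = (\<lambda>x. b x - ub x)"
  have ubL: "L2 \<Omega> ub" using spanL ub(1) .
  have wL: "L2 \<Omega> w" unfolding w_def using bL ubL by (rule L2_diff)
  have fu0L: "L2 \<Omega> (\<lambda>x. f x - u0 x)" using f spanL[OF u0(1)] by (rule L2_diff)
  have w_orth: "\<forall>b'\<in>B. ip \<Omega> w b' = 0" using ub(2) by (simp add: w_def)
  have w_span: "w \<in> fspan (insert b B)"
    unfolding w_def using B fspan_mem[of "insert b B" b] mono[OF ub(1)] by (intro fspan_diff) auto
  have b_eq: "b = (\<lambda>x. ub x + w x)" by (auto simp: w_def)
  define \<alpha> where "\<alpha> = ip \<Omega> (\<lambda>x. f x - u0 x) w / ip \<Omega> w w"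
  define u where "u = (\<lambda>x. 1 * u0 x + \<alpha> * w x)"
  have u_span: "u \<in> fspan (insert b B)" unfolding u_def using mono[OF u0(1)] w_span by (rule fspan_lin)
  have fu: "(\<lambda>x. f x - u x) = (\<lambda>x. 1 * (f x - u0 x) + (- \<alpha>) * w x)" by (auto simp: u_def)
  have fuL: "L2 \<Omega> (\<lambda>x. f x - u x)" unfolding fu using fu0L wL by (rule L2_lin)
  have ip_fu: "ip \<Omega> (\<lambda>x. f x - u x) g = ip \<Omega> (\<lambda>x. f x - u0 x) g - \<alpha> * ip \<Omega> w g" if "L2 \<Omega> g" for g
    unfolding fu using ip_lin1[OF fu0L wL that, of 1 "- \<alpha>"] by simp
  have o1: "ip \<Omega> (\<lambda>x. f x - u x) b' = 0" if "b' \<in> B" for b'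
    using ip_fu[OF BL[OF that]] u0(2) w_orth that by simp
  have o2: "ip \<Omega> (\<lambda>x. f x - u x) w = 0"
  proof (cases "ip \<Omega> w w = 0")
    case True
    then have "nrm \<Omega> w = 0" by (simp add: nrm_def)
    then show ?thesis using ip_Cauchy_Schwarz[OF fuL wL] by simp
  next
    case False
    then show ?thesis using ip_fu[OF wL] by (simp add: \<alpha>_def)
  qed
  have "ip \<Omega> (\<lambda>x. f x - u x) ub = 0"
    by (rule ip_fspan_eq_0[OF B BL fuL _ ub(1)]) (use o1 in auto)
  then have "ip \<Omega> (\<lambda>x. f x - u x) b = 0"
    using o2 ip_add2[OF ubL wL fuL] b_eq by simp
  then show ?thesis using o1 u_span by blast
qed

lemma orthogonal_residual_exists:
  assumes "finite B" "\<And>b. b \<in> B \<Longrightarrow> L2 \<Omega> b"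
  shows "L2 \<Omega> f \<Longrightarrow> \<exists>u\<in>fspan B. \<forall>b\<in>B. ip \<Omega> (\<lambda>x. f x - u x) b = 0"
  using assms
proof (induction B arbitrary: f rule: finite_induct)
  case empty
  then show ?case using fspan_zero by blast
next
  case (insert b B)
  have BL: "\<And>b'. b' \<in> B \<Longrightarrow> L2 \<Omega> b'" and bL: "L2 \<Omega> b" using insert by auto
  obtain u0 where "u0 \<in> fspan B" "\<forall>b'\<in>B. ip \<Omega> (\<lambda>x. f x - u0 x) b' = 0"
    using insert.IH[OF insert.prems(1) BL] by blast
  moreover obtain ub where "ub \<in> fspan B" "\<forall>b'\<in>B. ip \<Omega> (\<lambda>x. b x - ub x) b' = 0"
    using insert.IH[OF bL BL] by blast
  ultimately show ?case using orthogonal_residual_insert[OF insert.hyps(1) BL bL insert.prems(1)] by blast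
qed

lemma proj_fspan:
  assumes "finite B" "\<And>b. b \<in> B \<Longrightarrow> L2 \<Omega> b" "L2 \<Omega> f"
  shows "proj \<Omega> (fspan B) f \<in> fspan B \<and> (\<forall>\<phi>\<in>fspan B. ip \<Omega> (\<lambda>x. f x - proj \<Omega> (fspan B) f x) \<phi> = 0)"
proof -
  obtain u where u: "u \<in> fspan B" "\<forall>b\<in>B. ip \<Omega> (\<lambda>x. f x - u x) b = 0"
    using orthogonal_residual_exists[OF assms(1,2) assms(3)] by blast
  have uL: "L2 \<Omega> u" using fspan_L2[OF assms(1,2) u(1)] .
  have "\<forall>\<phi>\<in>fspan B. ip \<Omega> (\<lambda>x. f x - u x) \<phi> = 0"
    using ip_fspan_eq_0[OF assms(1,2) L2_diff[OF assms(3) uL]] u(2) by blast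
  with u(1) have "\<exists>u. u \<in> fspan B \<and> (\<forall>\<phi>\<in>fspan B. ip \<Omega> (\<lambda>x. f x - u x) \<phi> = 0)" by blast
  then show ?thesis unfolding proj_def by (rule someI_ex)
qed

lemma nrm_proj_fspan_le:
  assumes "finite B" "\<And>b. b \<in> B \<Longrightarrow> L2 \<Omega> b" "L2 \<Omega> f"
  shows "nrm \<Omega> (proj \<Omega> (fspan B) f) \<le> nrm \<Omega> f"
proof -
  let ?p = "proj \<Omega> (fspan B) f"
  have p: "?p \<in> fspan B" "\<forall>\<phi>\<in>fspan B. ip \<Omega> (\<lambda>x. f x - ?p x) \<phi> = 0"
    using proj_fspan[OF assms] by auto
  have pL: "L2 \<Omega> ?p" using fspan_L2[OF assms(1,2) p(1)] .
  have "ip \<Omega> (\<lambda>x. f x - ?p x) ?p = 0" using p by blast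
  then have "ip \<Omega> f ?p = ip \<Omega> ?p ?p" using ip_diff1[OF assms(3) pL pL] by simp
  then have "(nrm \<Omega> ?p)\<^sup>2 \<le> nrm \<Omega> f * nrm \<Omega> ?p"
    using ip_Cauchy_Schwarz[OF assms(3) pL] by (simp add: nrm_sq)
  then have "nrm \<Omega> ?p * nrm \<Omega> ?p \<le> nrm \<Omega> f * nrm \<Omega> ?p" by (simp add: power2_eq_square)
  then show ?thesis using nrm_nonneg[of \<Omega> ?p] nrm_nonneg[of \<Omega> f]
    by (cases "nrm \<Omega> ?p = 0") (auto simp: mult_le_cancel_right)
qed

lemma nrm_le_if_eq_proj_fspan:
  assumes B: "finite B" "\<And>b. b \<in> B \<Longrightarrow> L2 \<Omega> b" and f: "L2 \<Omega> f" and g: "L2 \<Omega> g"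
    and eq: "nrm \<Omega> (\<lambda>x. g x - proj \<Omega> (fspan B) f x) = 0"
  shows "nrm \<Omega> g \<le> nrm \<Omega> f"
proof -
  let ?p = "proj \<Omega> (fspan B) f"
  have pL: "L2 \<Omega> ?p" using proj_fspan[OF B f] fspan_L2[OF B] by blast
  have "nrm \<Omega> g = nrm \<Omega> (\<lambda>x. (g x - ?p x) + ?p x)" by simp
  also have "\<dots> \<le> nrm \<Omega> (\<lambda>x. g x - ?p x) + nrm \<Omega> ?p" by (rule nrm_triangle[OF L2_diff[OF g pL] pL])
  also have "\<dots> \<le> nrm \<Omega> f" using eq nrm_proj_fspan_le[OF B f] by simp
  finally show ?thesis .
qed

section \<open>Energy decay\<close>

lemma ip_add_scaled_self:
  assumes a: "L2 \<Omega> a" and g: "L2 \<Omega> g"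
  shows "ip \<Omega> (\<lambda>x. a x + s * g x) (\<lambda>x. a x + s * g x) = ip \<Omega> a a + 2 * s * ip \<Omega> a g + s\<^sup>2 * ip \<Omega> g g"
proof -
  have L: "L2 \<Omega> (\<lambda>x. 1 * a x + s * g x)" using a g by (rule L2_lin)
  have "ip \<Omega> (\<lambda>x. 1 * a x + s * g x) (\<lambda>x. 1 * a x + s * g x) =
      1 * ip \<Omega> a (\<lambda>x. 1 * a x + s * g x) + s * ip \<Omega> g (\<lambda>x. 1 * a x + s * g x)"
    by (rule ip_lin1[OF a g L])
  also have "ip \<Omega> a (\<lambda>x. 1 * a x + s * g x) = 1 * ip \<Omega> a a + s * ip \<Omega> a g" by (rule ip_lin2[OF a g a])
  also have "ip \<Omega> g (\<lambda>x. 1 * a x + s * g x) = 1 * ip \<Omega> g a + s * ip \<Omega> g g" by (rule ip_lin2[OF a g g])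
  finally show ?thesis by (simp add: ip_sym[of \<Omega> g a] power2_eq_square algebra_simps)
qed

lemma ip_self_difference_quotient_le:
  assumes a: "L2 \<Omega> a" and b: "L2 \<Omega> b" and q: "L2 \<Omega> q" and s: "s \<noteq> 0"
  shows "\<bar>(ip \<Omega> (\<lambda>x. a x + s * (b x + q x)) (\<lambda>x. a x + s * (b x + q x)) - ip \<Omega> a a) / s - 2 * ip \<Omega> b a\<bar>
    \<le> 2 * (nrm \<Omega> a * nrm \<Omega> q) + \<bar>s\<bar> * (nrm \<Omega> b + nrm \<Omega> q)\<^sup>2"
proof -
  let ?g = "\<lambda>x. b x + q x"
  have gL: "L2 \<Omega> ?g" using b q by (rule L2_add)
  have "(ip \<Omega> (\<lambda>x. a x + s * ?g x) (\<lambda>x. a x + s * ?g x) - ip \<Omega> a a) / s - 2 * ip \<Omega> b a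
      = 2 * ip \<Omega> a q + s * ip \<Omega> ?g ?g"
    unfolding ip_add_scaled_self[OF a gL] ip_add2[OF b q a] using s
    by (simp add: ip_sym[of \<Omega> b a] power2_eq_square field_simps)
  also have "\<bar>\<dots>\<bar> \<le> 2 * \<bar>ip \<Omega> a q\<bar> + \<bar>s\<bar> * ip \<Omega> ?g ?g"
    using abs_triangle_ineq[of "2 * ip \<Omega> a q" "s * ip \<Omega> ?g ?g"] ip_self_nonneg[of \<Omega> ?g]
    by (simp add: abs_mult)
  also have "\<dots> \<le> 2 * (nrm \<Omega> a * nrm \<Omega> q) + \<bar>s\<bar> * (nrm \<Omega> b + nrm \<Omega> q)\<^sup>2"
  proof -
    have "ip \<Omega> ?g ?g \<le> (nrm \<Omega> b + nrm \<Omega> q)\<^sup>2"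
      unfolding nrm_sq[symmetric] using nrm_triangle[OF b q] nrm_nonneg by (intro power_mono) auto
    then show ?thesis using ip_Cauchy_Schwarz[OF a q] by (intro add_mono mult_left_mono) auto
  qed
  finally show ?thesis .
qed

lemma has_real_derivative_ip_self:
  fixes z z' :: "real \<Rightarrow> real^'d \<Rightarrow> real"
  assumes t: "t > 0" and zL: "\<And>y. y > 0 \<Longrightarrow> L2 \<Omega> (z y)" and z'L: "L2 \<Omega> (z' t)"
    and lim: "((\<lambda>s. nrm \<Omega> (\<lambda>x. (z s x - z t x) / (s - t) - z' t x)) \<longlongrightarrow> 0) (at t)"
  shows "((\<lambda>y. ip \<Omega> (z y) (z y)) has_real_derivative 2 * ip \<Omega> (z' t) (z t)) (at t)"
proof -
  define q where "q y = (\<lambda>x. (z y x - z t x) / (y - t) - z' t x)" for y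
  define D where "D y = (ip \<Omega> (z y) (z y) - ip \<Omega> (z t) (z t)) / (y - t) - 2 * ip \<Omega> (z' t) (z t)" for y
  define B where "B y = 2 * (nrm \<Omega> (z t) * nrm \<Omega> (q y)) + \<bar>y - t\<bar> * (nrm \<Omega> (z' t) + nrm \<Omega> (q y))\<^sup>2" for y
  have ztL: "L2 \<Omega> (z t)" using zL t by simp
  have "eventually (\<lambda>y. y > 0) (at t)"
    using order_tendstoD(1)[OF tendsto_ident_at t] by simp
  moreover have "eventually (\<lambda>y. y \<noteq> t) (at t)" by (simp add: eventually_at_filter)
  ultimately have "eventually (\<lambda>y. y > 0 \<and> y \<noteq> t) (at t)" by eventually_elim simp
  then have "eventually (\<lambda>y. norm (D y) \<le> B y) (at t)"
  proof eventually_elim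
    case (elim y)
    have "L2 \<Omega> (\<lambda>x. (1 / (y - t)) * z y x + (- 1 / (y - t)) * z t x)"
      using zL[of y] ztL elim by (intro L2_lin) auto
    then have qL: "L2 \<Omega> (q y)" unfolding q_def using z'L by (intro L2_diff) (simp_all add: diff_divide_distrib)
    have "z y = (\<lambda>x. z t x + (y - t) * (z' t x + q y x))" using elim by (auto simp: q_def field_simps)
    then have "D y = (ip \<Omega> (\<lambda>x. z t x + (y - t) * (z' t x + q y x)) (\<lambda>x. z t x + (y - t) * (z' t x + q y x))
        - ip \<Omega> (z t) (z t)) / (y - t) - 2 * ip \<Omega> (z' t) (z t)"
      unfolding D_def by (rule arg_cong)
    then show ?case
      using ip_self_difference_quotient_le[OF ztL z'L qL, of "y - t"] elim by (simp only: B_def real_norm_def) simp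
  qed
  moreover have q0: "((\<lambda>y. nrm \<Omega> (q y)) \<longlongrightarrow> 0) (at t)" using lim by (simp add: q_def)
  have "(B \<longlongrightarrow> 2 * (nrm \<Omega> (z t) * 0) + \<bar>t - t\<bar> * (nrm \<Omega> (z' t) + 0)\<^sup>2) (at t)"
    unfolding B_def by (intro tendsto_intros q0)
  then have "(B \<longlongrightarrow> 0) (at t)" by simp
  ultimately have "(D \<longlongrightarrow> 0) (at t)" by (rule Lim_null_comparison)
  then have "((\<lambda>y. D y + 2 * ip \<Omega> (z' t) (z t)) \<longlongrightarrow> 0 + 2 * ip \<Omega> (z' t) (z t)) (at t)"
    by (intro tendsto_intros)
  then show ?thesis by (simp add: D_def has_field_derivative_iff)
qed

lemma exp_decay_of_differential_inequality:
  fixes E :: "real \<Rightarrow> real" and w :: real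
  assumes der: "\<And>t. t > 0 \<Longrightarrow> \<exists>D. (E has_real_derivative D) (at t) \<and> D \<le> - 2 * w * E t"
    and cont0: "(E \<longlongrightarrow> E 0) (at_right 0)"
    and T: "T \<ge> 0"
  shows "E T \<le> exp (- 2 * w * T) * E 0"
proof -
  define F where "F t = exp (2 * w * t) * E t" for t
  have derF: "\<exists>y. (F has_real_derivative y) (at t) \<and> y \<le> 0" if tp: "t > 0" for t
  proof -
    obtain D where D: "(E has_real_derivative D) (at t)" "D \<le> - 2 * w * E t" using der[OF tp] by blast
    have "(F has_real_derivative exp (2 * w * t) * (2 * w) * E t + exp (2 * w * t) * D) (at t)"
      unfolding F_def[abs_def] by (auto intro!: derivative_eq_intros D(1))
    moreover have "exp (2 * w * t) * (2 * w) * E t + exp (2 * w * t) * D \<le> 0"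
    proof -
      have "exp (2 * w * t) * (2 * w) * E t + exp (2 * w * t) * D = exp (2 * w * t) * (2 * w * E t + D)"
        by (simp add: algebra_simps)
      also have "\<dots> \<le> 0" using D(2) by (intro mult_nonneg_nonpos) auto
      finally show ?thesis .
    qed
    ultimately show ?thesis by blast
  qed
  have contF: "continuous_on {0..T} F"
    unfolding continuous_on_eq_continuous_within
  proof
    fix t assume t: "t \<in> {0..T}"
    show "continuous (at t within {0..T}) F"
    proof (cases "t = 0")
      case False
      with t have "t > 0" by simp
      then obtain y where "(F has_real_derivative y) (at t)" using derF by blast
      then have "isCont F t" by (rule DERIV_isCont)
      then show ?thesis by (rule continuous_at_imp_continuous_at_within)
    next
      case True
      have "(F \<longlongrightarrow> exp (2 * w * 0) * E 0) (at_right 0)"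
        unfolding F_def[abs_def] by (intro tendsto_intros cont0)
      then have l: "(F \<longlongrightarrow> F 0) (at 0 within {0<..})" by (simp add: F_def)
      have "at 0 within {0..T} = at 0 within ({0..T} - {0})" by (simp add: at_within_def)
      moreover have "(F \<longlongrightarrow> F 0) (at 0 within ({0..T} - {0}))"
        by (rule tendsto_within_subset[OF l]) auto
      ultimately have "(F \<longlongrightarrow> F 0) (at 0 within {0..T})" by simp
      then show ?thesis using True by (simp add: continuous_within)
    qed
  qed
  have "F T \<le> F 0"
    using DERIV_nonpos_imp_decreasing_open[OF T _ contF] derF by auto
  then have "exp (2 * w * T) * E T \<le> E 0" by (simp add: F_def)
  then have "exp (- 2 * w * T) * (exp (2 * w * T) * E T) \<le> exp (- 2 * w * T) * E 0"
    by (intro mult_left_mono) auto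
  then show ?thesis by (simp add: mult.assoc[symmetric] exp_add[symmetric])
qed

lemma nrm_exp_decay:
  fixes z z' :: "real \<Rightarrow> real^'d \<Rightarrow> real"
  assumes zL: "\<And>t. t \<ge> 0 \<Longrightarrow> L2 \<Omega> (z t)" and z'L: "\<And>t. t > 0 \<Longrightarrow> L2 \<Omega> (z' t)"
    and cont: "((\<lambda>s. nrm \<Omega> (\<lambda>x. z s x - z 0 x)) \<longlongrightarrow> 0) (at_right 0)"
    and der: "\<And>t. t > 0 \<Longrightarrow> ((\<lambda>s. nrm \<Omega> (\<lambda>x. (z s x - z t x) / (s - t) - z' t x)) \<longlongrightarrow> 0) (at t)"
    and dissipative: "\<And>t. t > 0 \<Longrightarrow> ip \<Omega> (z' t) (z t) \<le> - \<omega> * (nrm \<Omega> (z t))\<^sup>2"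
    and t: "t \<ge> 0"
  shows "nrm \<Omega> (z t) \<le> exp (- \<omega> * t) * nrm \<Omega> (z 0)"
proof -
  define E where "E t = ip \<Omega> (z t) (z t)" for t
  have "\<exists>D. (E has_real_derivative D) (at t) \<and> D \<le> - 2 * \<omega> * E t" if "t > 0" for t
  proof (intro exI conjI)
    show "(E has_real_derivative 2 * ip \<Omega> (z' t) (z t)) (at t)"
      unfolding E_def[abs_def] using that zL z'L der by (intro has_real_derivative_ip_self) auto
    show "2 * ip \<Omega> (z' t) (z t) \<le> - 2 * \<omega> * E t"
      using dissipative[OF that] by (simp add: E_def nrm_sq)
  qed
  moreover have "(E \<longlongrightarrow> E 0) (at_right 0)"
  proof -
    have "((\<lambda>s. nrm \<Omega> (z s) - nrm \<Omega> (z 0)) \<longlongrightarrow> 0) (at_right 0)"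
    proof (rule Lim_null_comparison[OF _ cont])
      show "eventually (\<lambda>s. norm (nrm \<Omega> (z s) - nrm \<Omega> (z 0)) \<le> nrm \<Omega> (\<lambda>x. z s x - z 0 x)) (at_right 0)"
        using eventually_at_right_less[of 0]
      proof eventually_elim
        case (elim s)
        then show ?case using nrm_reverse_triangle[OF zL zL, of s 0] by simp
      qed
    qed
    then have "((\<lambda>s. (nrm \<Omega> (z 0) + (nrm \<Omega> (z s) - nrm \<Omega> (z 0)))\<^sup>2) \<longlongrightarrow> (nrm \<Omega> (z 0) + 0)\<^sup>2) (at_right 0)"
      by (intro tendsto_intros)
    then show ?thesis by (simp add: E_def[abs_def] nrm_sq)
  qed
  ultimately have "E t \<le> exp (- 2 * \<omega> * t) * E 0"
    using t by (rule exp_decay_of_differential_inequality)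
  moreover have "exp (- 2 * \<omega> * t) = (exp (- \<omega> * t))\<^sup>2"
    by (simp add: power2_eq_square flip: exp_add)
  ultimately have "(nrm \<Omega> (z t))\<^sup>2 \<le> (exp (- \<omega> * t) * nrm \<Omega> (z 0))\<^sup>2"
    by (simp only: E_def nrm_sq power_mult_distrib)
  then show ?thesis
    by (rule power2_le_imp_le) (simp add: nrm_nonneg)
qed

lemma fspan_solution_decay:
  fixes z z' :: "real \<Rightarrow> real^'d \<Rightarrow> real" and L :: "(real^'d \<Rightarrow> real) \<Rightarrow> real^'d \<Rightarrow> real"
  assumes \<Omega>: "open \<Omega>" "bounded \<Omega>" and s0: "H1_embeds_L4 \<Omega> s0"
    and Bs: "finite Bs" "\<forall>b\<in>Bs. H10 \<Omega> b"
    and zV: "\<And>t. t \<ge> 0 \<Longrightarrow> z t \<in> fspan Bs" and z'V: "\<And>t. t > 0 \<Longrightarrow> z' t \<in> fspan Bs"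
    and cont: "((\<lambda>s. nrm \<Omega> (\<lambda>x. z s x - z 0 x)) \<longlongrightarrow> 0) (at_right 0)"
    and der: "\<And>t. t > 0 \<Longrightarrow> ((\<lambda>s. nrm \<Omega> (\<lambda>x. (z s x - z t x) / (s - t) - z' t x)) \<longlongrightarrow> 0) (at t)"
    and ode: "\<And>t. t > 0 \<Longrightarrow>
      ip \<Omega> (z' t) (z t) + c t * ip \<Omega> (\<lambda>x. z t x * vgrad \<Omega> v (z t) x) (z t) = ip \<Omega> (L (z t)) (z t)"
    and dissipative: "\<And>\<phi>. \<phi> \<in> fspan Bs \<Longrightarrow> ip \<Omega> (L \<phi>) \<phi> \<le> - \<omega> * (nrm \<Omega> \<phi>)\<^sup>2"
    and z0: "L2 \<Omega> z0" and init: "nrm \<Omega> (\<lambda>x. z 0 x - proj \<Omega> (fspan Bs) z0 x) = 0"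
    and t: "t \<ge> 0"
  shows "nrm \<Omega> (z t) \<le> exp (- \<omega> * t) * nrm \<Omega> z0"
proof -
  have BL: "\<And>b. b \<in> Bs \<Longrightarrow> L2 \<Omega> b"
    using Bs(2) by (auto intro: is_wgrad_L2[OF is_wgrad_wgrad[OF H10_H1]])
  have VL: "\<And>u. u \<in> fspan Bs \<Longrightarrow> L2 \<Omega> u" by (rule fspan_L2[OF Bs(1) BL])
  have "ip \<Omega> (\<lambda>x. z t x * vgrad \<Omega> v (z t) x) (z t) = 0" if "t > 0" for t
  proof -
    obtain c where "z t = (\<lambda>x. \<Sum>b\<in>Bs. c b * b x)" using zV[of t] \<open>t > 0\<close> by (auto simp: fspan_iff)
    then have "H10 \<Omega> (z t)" using H10_lincomb[OF \<Omega> Bs] by simp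
    then show ?thesis by (rule ip_convection_self_eq_0[OF \<Omega> s0])
  qed
  then have "ip \<Omega> (z' t) (z t) \<le> - \<omega> * (nrm \<Omega> (z t))\<^sup>2" if "t > 0" for t
    using ode[OF that] dissipative[OF zV] that by simp
  then have "nrm \<Omega> (z t) \<le> exp (- \<omega> * t) * nrm \<Omega> (z 0)"
    using VL zV z'V by (intro nrm_exp_decay[OF _ _ cont der _ t]) auto
  also have "\<dots> \<le> exp (- \<omega> * t) * nrm \<Omega> z0"
    using nrm_le_if_eq_proj_fspan[OF Bs(1) BL z0 VL[OF zV] init] by simp
  finally show ?thesis .
qed

theorem mainTheorem15:
  fixes \<Omega> Obs :: "(real^'d) set"
    and \<eta> \<nu>0 Ca s0 h0 \<omega>P MP \<omega> :: real
    and v :: "real^'d"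
    and fs ys z0 :: "real^'d \<Rightarrow> real"
    and V :: "real \<Rightarrow> (real^'d \<Rightarrow> real) set"
    and P :: "real \<Rightarrow> (real^'d \<Rightarrow> real) \<Rightarrow> (real^'d \<Rightarrow> real)"
  assumes dim: "CARD('d) \<in> {1, 2, 3}"
    and dom: "open \<Omega>" "bounded \<Omega>" "\<Omega> \<noteq> {}" "smooth_boundary \<Omega>"
    and eta: "\<eta> > 0"
    and fs: "L2 \<Omega> fs"
    and obs: "open Obs" "Obs \<noteq> {}" "Obs \<subseteq> \<Omega>"
    and ys: "H2 \<Omega> ys" "H10 \<Omega> ys"
      "\<forall>\<phi>. test_fun \<Omega> \<phi> \<longrightarrow>
         \<eta> * (\<Sum>i\<in>UNIV. ip \<Omega> (wgrad \<Omega> ys i) (pd i \<phi>)) + ip \<Omega> (\<lambda>x. ys x * vgrad \<Omega> v ys x) \<phi>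
         + \<nu>0 * ip \<Omega> ys \<phi> = ip \<Omega> fs \<phi>"
    and s0: "\<forall>z. H1 \<Omega> z \<longrightarrow> integrable (lebesgue_on \<Omega>) (\<lambda>x. (z x) ^ 4) \<and>
                 L4norm \<Omega> z \<le> s0 * H1norm \<Omega> z"
    and Ca: "\<forall>z. H2 \<Omega> z \<and> H10 \<Omega> z \<longrightarrow>
                 (AE x in lebesgue_on \<Omega>. \<bar>z x\<bar> \<le> Ca * sqrt (H1norm \<Omega> z) * sqrt (H2norm \<Omega> z))"
    and nuhat: "\<nu>0 - (norm v)\<^sup>2 / \<eta> * (Ca\<^sup>2 + s0 ^ 4) * (H2norm \<Omega> ys)\<^sup>2 > 0"
    and h0: "h0 > 0" and \<omega>P: "\<omega>P > 0" and MP: "MP > 0"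
    and Vh: "\<forall>h. 0 < h \<and> h < h0 \<longrightarrow>
               (\<exists>Bs. finite Bs \<and> (\<forall>b\<in>Bs. H10 \<Omega> b) \<and> V h = fspan Bs)"
    and proj_approx: "\<exists>C. \<forall>h. 0 < h \<and> h < h0 \<longrightarrow> (\<forall>w. H2 \<Omega> w \<and> H10 \<Omega> w \<longrightarrow>
               nrm \<Omega> (\<lambda>x. w x - proj \<Omega> (V h) w x) \<le> C * h\<^sup>2 * H2norm \<Omega> w \<and>
               sqrt (\<Sum>i\<in>UNIV. (nrm \<Omega> (wgrad \<Omega> (\<lambda>x. w x - proj \<Omega> (V h) w x) i))\<^sup>2)
                 \<le> C * h * H2norm \<Omega> w)"
    and P_ric: "\<forall>h. 0 < h \<and> h < h0 \<longrightarrow>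
               (\<forall>z\<in>V h. P h z \<in> V h) \<and>
               (\<forall>z\<in>V h. \<forall>w\<in>V h. \<forall>c d. P h (\<lambda>x. c * z x + d * w x) = (\<lambda>x. c * P h z x + d * P h w x)) \<and>
               (\<forall>z\<in>V h. \<forall>w\<in>V h. ip \<Omega> (P h z) w = ip \<Omega> z (P h w)) \<and>
               (\<forall>z\<in>V h. ip \<Omega> (P h z) z \<ge> 0) \<and>
               (\<forall>z\<in>V h. nrm \<Omega> (riccati_res \<Omega> (V h) (a_form \<Omega> \<eta> v \<nu>0 ys) \<omega> Obs (P h) z) = 0)"
    and A2: "\<forall>h. 0 < h \<and> h < h0 \<longrightarrow> (\<forall>\<phi>\<in>V h.
               ip \<Omega> (closed_loop \<Omega> (V h) (a_form \<Omega> \<eta> v \<nu>0 ys) \<omega> Obs (P h) \<phi>) \<phi>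
                 \<le> - \<omega>P * (nrm \<Omega> \<phi>)\<^sup>2)"
    and \<omega>: "\<omega> > 0"
    and z0: "L2 \<Omega> z0"
  shows "\<exists>C>0. \<forall>h. 0 < h \<and> h < h0 \<longrightarrow>
           (\<forall>z z'. ((\<forall>t\<ge>0. z t \<in> V h) \<and>
                    ((\<lambda>s. nrm \<Omega> (\<lambda>x. z s x - z 0 x)) \<longlongrightarrow> 0) (at_right 0) \<and>
                    (\<forall>t>0. z' t \<in> V h \<and>
                       ((\<lambda>s. nrm \<Omega> (\<lambda>x. (z s x - z t x) / (s - t) - z' t x)) \<longlongrightarrow> 0) (at t)) \<and>
                    (\<forall>t>0. \<forall>\<phi>\<in>V h.
                       ip \<Omega> (z' t) \<phi> + exp (- \<omega> * t) * ip \<Omega> (\<lambda>x. z t x * vgrad \<Omega> v (z t) x) \<phi>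
                       = ip \<Omega> (closed_loop \<Omega> (V h) (a_form \<Omega> \<eta> v \<nu>0 ys) \<omega> Obs (P h) (z t)) \<phi>) \<and>
                    nrm \<Omega> (\<lambda>x. z 0 x - proj \<Omega> (V h) z0 x) = 0)
              \<longrightarrow> (\<forall>t\<ge>0. nrm \<Omega> (z t) \<le> C * exp (- \<omega>P * t) * nrm \<Omega> z0))"
proof (intro exI[of _ 1] conjI allI impI)
  fix h and z z' :: "real \<Rightarrow> real^'d \<Rightarrow> real" and t :: real
  assume h: "0 < h \<and> h < h0" and t: "0 \<le> t"
  assume "(\<forall>t\<ge>0. z t \<in> V h) \<and> ((\<lambda>s. nrm \<Omega> (\<lambda>x. z s x - z 0 x)) \<longlongrightarrow> 0) (at_right 0) \<and>
    (\<forall>t>0. z' t \<in> V h \<and> ((\<lambda>s. nrm \<Omega> (\<lambda>x. (z s x - z t x) / (s - t) - z' t x)) \<longlongrightarrow> 0) (at t)) \<and>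
    (\<forall>t>0. \<forall>\<phi>\<in>V h. ip \<Omega> (z' t) \<phi> + exp (- \<omega> * t) * ip \<Omega> (\<lambda>x. z t x * vgrad \<Omega> v (z t) x) \<phi>
       = ip \<Omega> (closed_loop \<Omega> (V h) (a_form \<Omega> \<eta> v \<nu>0 ys) \<omega> Obs (P h) (z t)) \<phi>) \<and>
    nrm \<Omega> (\<lambda>x. z 0 x - proj \<Omega> (V h) z0 x) = 0"
  moreover obtain Bs where "finite Bs" "\<forall>b\<in>Bs. H10 \<Omega> b" and V: "V h = fspan Bs"
    using Vh h by blast
  moreover have "H1_embeds_L4 \<Omega> s0" using s0 by (simp add: H1_embeds_L4_def)
  ultimately have "nrm \<Omega> (z t) \<le> exp (- \<omega>P * t) * nrm \<Omega> z0"
    using A2 h by (intro fspan_solution_decay[OF dom(1,2), where z=z and z'=z' and v=v and t=t and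
        c="\<lambda>t. exp (- \<omega> * t)" and \<omega>=\<omega>P and L="closed_loop \<Omega> (fspan Bs) (a_form \<Omega> \<eta> v \<nu>0 ys) \<omega> Obs (P h)"])
      (auto simp: z0 t)
  then show "nrm \<Omega> (z t) \<le> 1 * exp (- \<omega>P * t) * nrm \<Omega> z0" by simp
qed simp

end
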